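(* Let $D=T_k$. Then the almost-sure theory of the class of all finite $D$-coloured digraphs equals the first-order theory of $C_D$.
   Context: $T_k$ is the transitive tournament $(\{1,\dots,k\};<)$. A $D$-coloured digraph is a digraph $G$ with unary predicates $P_u$, $u\in V(D)$, such that each vertex lies in exactly one $P_u$ and the map $x\mapsto u$ for $x\in P_u$ is a homomorphism $G\to D$. The almost-sure theory of this class is the set of first-order sentences in the signature $\{E\}\cup\{P_u:u\in V(D)\}$ whose fraction of satisfying $D$-coloured digraphs with vertex set $\{1,\dots,n\}$ tends to $1$. $C_D$ is the (up to isomorphism unique) countable homogeneous $D$-coloured digraph whose finite substructures are, up to isomorphism, exactly the finite $D$-coloured digraphs. *)

theory Defs
  imports Complex_Main "HOL-Library.Countable_Set"
begin

text \<open>Variables are natural numbers. Colour predicates P_u are indexed by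
  natural numbers u; the vertices of D = T_k are 1..k.\<close>

datatype fm =
    FEq nat nat
  | FEdge nat nat
  | FCol nat nat     \<comment> \<open>FCol u i  means  P_u(x_i)\<close>
  | FNeg fm
  | FConj fm fm
  | FEx nat fm

fun free_vars :: "fm \<Rightarrow> nat set" where
  "free_vars (FEq i j) = {i, j}"
| "free_vars (FEdge i j) = {i, j}"
| "free_vars (FCol u i) = {i}"
| "free_vars (FNeg \<phi>) = free_vars \<phi>"
| "free_vars (FConj \<phi> \<psi>) = free_vars \<phi> \<union> free_vars \<psi>"
| "free_vars (FEx i \<phi>) = free_vars \<phi> - {i}"

fun colours :: "fm \<Rightarrow> nat set" where
  "colours (FEq i j) = {}"
| "colours (FEdge i j) = {}"
| "colours (FCol u i) = {u}"
| "colours (FNeg \<phi>) = colours \<phi>"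
| "colours (FConj \<phi> \<psi>) = colours \<phi> \<union> colours \<psi>"
| "colours (FEx i \<phi>) = colours \<phi>"

definition sentence :: "nat \<Rightarrow> fm \<Rightarrow> bool" where
  "sentence k \<phi> \<longleftrightarrow> free_vars \<phi> = {} \<and> colours \<phi> \<subseteq> {1..k}"

fun sat :: "'a set \<Rightarrow> ('a \<Rightarrow> 'a \<Rightarrow> bool) \<Rightarrow> (nat \<Rightarrow> 'a \<Rightarrow> bool)
            \<Rightarrow> (nat \<Rightarrow> 'a) \<Rightarrow> fm \<Rightarrow> bool" where
  "sat V E P \<rho> (FEq i j) \<longleftrightarrow> \<rho> i = \<rho> j"
| "sat V E P \<rho> (FEdge i j) \<longleftrightarrow> E (\<rho> i) (\<rho> j)"
| "sat V E P \<rho> (FCol u i) \<longleftrightarrow> P u (\<rho> i)"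
| "sat V E P \<rho> (FNeg \<phi>) \<longleftrightarrow> \<not> sat V E P \<rho> \<phi>"
| "sat V E P \<rho> (FConj \<phi> \<psi>) \<longleftrightarrow> sat V E P \<rho> \<phi> \<and> sat V E P \<rho> \<psi>"
| "sat V E P \<rho> (FEx i \<phi>) \<longleftrightarrow> (\<exists>x\<in>V. sat V E P (\<rho>(i := x)) \<phi>)"

text \<open>Truth of a sentence (the assignment is irrelevant; we take all assignments
  into V, which is correct also for the empty structure).\<close>
definition models :: "'a set \<Rightarrow> ('a \<Rightarrow> 'a \<Rightarrow> bool) \<Rightarrow> (nat \<Rightarrow> 'a \<Rightarrow> bool) \<Rightarrow> fm \<Rightarrow> bool" where
  "models V E P \<phi> \<longleftrightarrow> (\<forall>\<rho>. (\<forall>i. \<rho> i \<in> V) \<longrightarrow> sat V E P \<rho> \<phi>)"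

text \<open>T_k = ({1..k}; <).\<close>
definition Tk_coloured_digraph ::
  "nat \<Rightarrow> 'a set \<Rightarrow> ('a \<Rightarrow> 'a \<Rightarrow> bool) \<Rightarrow> (nat \<Rightarrow> 'a \<Rightarrow> bool) \<Rightarrow> bool" where
  "Tk_coloured_digraph k V E P \<longleftrightarrow>
     (\<forall>x y. E x y \<longrightarrow> x \<in> V \<and> y \<in> V \<and> x \<noteq> y) \<and>
     (\<forall>u x. P u x \<longrightarrow> u \<in> {1..k} \<and> x \<in> V) \<and>
     (\<forall>x\<in>V. \<exists>!u. P u x) \<and>
     (\<forall>x y u v. E x y \<longrightarrow> P u x \<longrightarrow> P v y \<longrightarrow> u < v)"

definition almost_sure :: "nat \<Rightarrow> fm \<Rightarrow> bool" where
  "almost_sure k \<phi> \<longleftrightarrow>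
     (\<lambda>n. real (card {(E, P). Tk_coloured_digraph k {1..n} E P \<and> models {1..n} E P \<phi>})
          / real (card {(E, P). Tk_coloured_digraph k {1..n} E P}))
     \<longlonglongrightarrow> 1"

definition embedding ::
  "('b \<Rightarrow> 'a) \<Rightarrow> 'b set \<Rightarrow> ('b \<Rightarrow> 'b \<Rightarrow> bool) \<Rightarrow> (nat \<Rightarrow> 'b \<Rightarrow> bool)
   \<Rightarrow> 'a set \<Rightarrow> ('a \<Rightarrow> 'a \<Rightarrow> bool) \<Rightarrow> (nat \<Rightarrow> 'a \<Rightarrow> bool) \<Rightarrow> bool" where
  "embedding f V E P V' E' P' \<longleftrightarrow>
     inj_on f V \<and> f ` V \<subseteq> V' \<and>
     (\<forall>x\<in>V. \<forall>y\<in>V. E' (f x) (f y) \<longleftrightarrow> E x y) \<and>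
     (\<forall>u. \<forall>x\<in>V. P' u (f x) \<longleftrightarrow> P u x)"

definition homogeneous :: "'a set \<Rightarrow> ('a \<Rightarrow> 'a \<Rightarrow> bool) \<Rightarrow> (nat \<Rightarrow> 'a \<Rightarrow> bool) \<Rightarrow> bool" where
  "homogeneous V E P \<longleftrightarrow>
     (\<forall>A B g. finite A \<and> A \<subseteq> V \<and> B \<subseteq> V \<and> bij_betw g A B \<and>
        (\<forall>x\<in>A. \<forall>y\<in>A. E (g x) (g y) \<longleftrightarrow> E x y) \<and>
        (\<forall>u. \<forall>x\<in>A. P u (g x) \<longleftrightarrow> P u x)
      \<longrightarrow> (\<exists>h. bij_betw h V V \<and> embedding h V E P V E P \<and> (\<forall>x\<in>A. h x = g x)))"

text \<open>C_D: a countable homogeneous T_k-coloured digraph whose finite induced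
  substructures are (up to isomorphism) exactly the finite T_k-coloured digraphs.
  Since it is itself T_k-coloured, its finite substructures are T_k-coloured
  digraphs; the other inclusion says every finite T_k-coloured digraph embeds
  (finite digraphs are represented, up to isomorphism, on subsets of nat).\<close>
definition is_C_Tk :: "nat \<Rightarrow> 'a set \<Rightarrow> ('a \<Rightarrow> 'a \<Rightarrow> bool) \<Rightarrow> (nat \<Rightarrow> 'a \<Rightarrow> bool) \<Rightarrow> bool" where
  "is_C_Tk k V E P \<longleftrightarrow>
     countable V \<and> Tk_coloured_digraph k V E P \<and> homogeneous V E P \<and>
     (\<forall>(W :: nat set) F Q. finite W \<and> Tk_coloured_digraph k W F Q \<longrightarrow>
        (\<exists>f. embedding f W F Q V E P))"

end

theory Submission
  imports Defs "HOL-Library.FuncSet" "HOL-Real_Asymp.Real_Asymp"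
begin

(* The N-th extension property says that over every set A of at most N vertices, every
   one-point extension type allowed by T_k (a colour u, in-neighbours in A of colours below u,
   out-neighbours in A of colours above u, no other arcs to A) is realised outside A. Two
   T_k-coloured digraphs with the N-th extension property satisfy the same sentences of quantifier
   depth at most N (back and forth), and C_D has the extension property for every N by
   universality and homogeneity.

   A T_k-coloured digraph on {1..n} is a colouring c together with an
   arbitrary set of admissible arcs (x, y), c x < c y, of which there are
   (n^2 - sum of the squared class sizes) / 2. A colouring with a class smaller than n/(2k) has
   order n^2/k^2 fewer admissible arcs than a balanced one, so these colourings carry an
   exponentially small share of all structures. For the other colourings, a fixed extension
   instance over A has at least n/(2k) - N candidate witnesses whose arcs to A are disjoint and
   uniformly random, so it fails with probability at most (1 - 2^-(2N+1))^(n/(2k) - N), and there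
   are only polynomially many instances. Hence almost all structures have the N-th extension
   property, and a sentence of depth N holds almost surely iff it holds in C_D. *)

section \<open>Back and forth between structures with the extension property\<close>

lemma Tk_coloured_digraphD:
  assumes "Tk_coloured_digraph k V E P"
  shows Tk_edge_in: "E x y \<Longrightarrow> x \<in> V \<and> y \<in> V"
    and Tk_no_loop: "\<not> E x x"
    and Tk_colour_in: "P u x \<Longrightarrow> u \<in> {1..k} \<and> x \<in> V"
    and Tk_colour_unique: "x \<in> V \<Longrightarrow> \<exists>!u. P u x"
    and Tk_edge_colours: "E x y \<Longrightarrow> P u x \<Longrightarrow> P v y \<Longrightarrow> u < v"
  using assms unfolding Tk_coloured_digraph_def by blast+

fun quantifier_depth :: "fm \<Rightarrow> nat" where
  "quantifier_depth (FEq i j) = 0"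
| "quantifier_depth (FEdge i j) = 0"
| "quantifier_depth (FCol u i) = 0"
| "quantifier_depth (FNeg \<phi>) = quantifier_depth \<phi>"
| "quantifier_depth (FConj \<phi> \<psi>) = max (quantifier_depth \<phi>) (quantifier_depth \<psi>)"
| "quantifier_depth (FEx i \<phi>) = Suc (quantifier_depth \<phi>)"

definition extension_property ::
  "nat \<Rightarrow> nat \<Rightarrow> 'a set \<Rightarrow> ('a \<Rightarrow> 'a \<Rightarrow> bool) \<Rightarrow> (nat \<Rightarrow> 'a \<Rightarrow> bool) \<Rightarrow> bool" where
  "extension_property k N V E P \<longleftrightarrow>
     (\<forall>A Sin Sout u. finite A \<and> A \<subseteq> V \<and> card A \<le> N \<and> u \<in> {1..k} \<and> Sin \<subseteq> A \<and> Sout \<subseteq> A \<and>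
        (\<forall>a\<in>Sin. \<forall>v. P v a \<longrightarrow> v < u) \<and> (\<forall>a\<in>Sout. \<forall>v. P v a \<longrightarrow> u < v) \<longrightarrow>
        (\<exists>z\<in>V - A. P u z \<and> (\<forall>a\<in>A. E a z \<longleftrightarrow> a \<in> Sin) \<and> (\<forall>a\<in>A. E z a \<longleftrightarrow> a \<in> Sout)))"

definition partial_iso ::
  "('a \<Rightarrow> 'a \<Rightarrow> bool) \<Rightarrow> (nat \<Rightarrow> 'a \<Rightarrow> bool) \<Rightarrow> ('b \<Rightarrow> 'b \<Rightarrow> bool) \<Rightarrow> (nat \<Rightarrow> 'b \<Rightarrow> bool)
   \<Rightarrow> nat set \<Rightarrow> (nat \<Rightarrow> 'a) \<Rightarrow> (nat \<Rightarrow> 'b) \<Rightarrow> bool" where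
  "partial_iso E1 P1 E2 P2 X \<rho>1 \<rho>2 \<longleftrightarrow>
     (\<forall>j\<in>X. \<forall>j'\<in>X. (\<rho>1 j = \<rho>1 j' \<longleftrightarrow> \<rho>2 j = \<rho>2 j') \<and>
        (E1 (\<rho>1 j) (\<rho>1 j') \<longleftrightarrow> E2 (\<rho>2 j) (\<rho>2 j')) \<and> (\<forall>u. P1 u (\<rho>1 j) \<longleftrightarrow> P2 u (\<rho>2 j)))"

lemma partial_iso_sym: "partial_iso E1 P1 E2 P2 X \<rho>1 \<rho>2 \<Longrightarrow> partial_iso E2 P2 E1 P1 X \<rho>2 \<rho>1"
  unfolding partial_iso_def by metis

lemma partial_iso_subset: "partial_iso E1 P1 E2 P2 X \<rho>1 \<rho>2 \<Longrightarrow> Y \<subseteq> X \<Longrightarrow> partial_iso E1 P1 E2 P2 Y \<rho>1 \<rho>2"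
  unfolding partial_iso_def by blast

lemma partial_iso_insert:
  assumes "partial_iso E1 P1 E2 P2 Y \<rho>1 \<rho>2"
    and "E1 x x \<longleftrightarrow> E2 z z" and "\<forall>u. P1 u x \<longleftrightarrow> P2 u z"
    and "\<forall>j\<in>Y. (\<rho>1 j = x \<longleftrightarrow> \<rho>2 j = z) \<and> (E1 (\<rho>1 j) x \<longleftrightarrow> E2 (\<rho>2 j) z) \<and> (E1 x (\<rho>1 j) \<longleftrightarrow> E2 z (\<rho>2 j))"
  shows "partial_iso E1 P1 E2 P2 (insert i Y) (\<rho>1(i := x)) (\<rho>2(i := z))"
  using assms unfolding partial_iso_def by (auto simp: eq_commute[of x] eq_commute[of z])

lemma partial_iso_image_iff:
  assumes "partial_iso E1 P1 E2 P2 Y \<rho>1 \<rho>2" and "j \<in> Y"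
  shows "\<rho>2 j \<in> \<rho>2 ` {j'\<in>Y. R (\<rho>1 j')} \<longleftrightarrow> R (\<rho>1 j)"
proof
  assume "\<rho>2 j \<in> \<rho>2 ` {j'\<in>Y. R (\<rho>1 j')}"
  then obtain j' where "j' \<in> Y" "R (\<rho>1 j')" "\<rho>2 j = \<rho>2 j'" by blast
  moreover have "\<rho>1 j = \<rho>1 j'" if "j' \<in> Y" "\<rho>2 j = \<rho>2 j'"
    using assms that unfolding partial_iso_def by blast
  ultimately show "R (\<rho>1 j)" by metis
qed (use assms(2) in simp)

lemma extension_property_forth:
  assumes T1: "Tk_coloured_digraph k V1 E1 P1" and T2: "Tk_coloured_digraph k V2 E2 P2"
    and ext: "extension_property k N V2 E2 P2"
    and Y: "finite Y" "card Y \<le> N" and \<rho>2: "\<forall>j. \<rho>2 j \<in> V2"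
    and iso: "partial_iso E1 P1 E2 P2 Y \<rho>1 \<rho>2" and x: "x \<in> V1"
  shows "\<exists>z\<in>V2. partial_iso E1 P1 E2 P2 (insert i Y) (\<rho>1(i := x)) (\<rho>2(i := z))"
proof (cases "x \<in> \<rho>1 ` Y")
  case True
  then obtain j where j: "j \<in> Y" "x = \<rho>1 j" by blast
  have "partial_iso E1 P1 E2 P2 (insert i Y) (\<rho>1(i := x)) (\<rho>2(i := \<rho>2 j))"
    by (rule partial_iso_insert[OF iso]) (use iso j in \<open>auto simp: partial_iso_def\<close>)
  with \<rho>2 show ?thesis by blast
next
  case False
  obtain u where u: "\<And>v. P1 v x \<longleftrightarrow> v = u"
    using Tk_colour_unique[OF T1 x] by metis
  have "u \<in> {1..k}" using Tk_colour_in[OF T1] u by blast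
  define A where "A = \<rho>2 ` Y"
  define Sin where "Sin = \<rho>2 ` {j\<in>Y. E1 (\<rho>1 j) x}"
  define Sout where "Sout = \<rho>2 ` {j\<in>Y. E1 x (\<rho>1 j)}"
  have colours: "P1 v (\<rho>1 j)" if "j \<in> Y" "P2 v (\<rho>2 j)" for j v
    using iso that unfolding partial_iso_def by blast
  have "finite A" "A \<subseteq> V2" "card A \<le> N" "Sin \<subseteq> A" "Sout \<subseteq> A"
    using Y \<rho>2 card_image_le[OF Y(1), of \<rho>2] unfolding A_def Sin_def Sout_def by auto
  moreover have "\<forall>a\<in>Sin. \<forall>v. P2 v a \<longrightarrow> v < u" "\<forall>a\<in>Sout. \<forall>v. P2 v a \<longrightarrow> u < v"
    using Tk_edge_colours[OF T1] colours u unfolding Sin_def Sout_def by blast+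
  ultimately obtain z where z: "z \<in> V2 - A" "P2 u z"
    and z_in: "\<forall>a\<in>A. E2 a z \<longleftrightarrow> a \<in> Sin" and z_out: "\<forall>a\<in>A. E2 z a \<longleftrightarrow> a \<in> Sout"
    using ext[unfolded extension_property_def, rule_format, where A=A and Sin=Sin and Sout=Sout and u=u] \<open>u \<in> {1..k}\<close>
    by blast
  have "P2 v z \<longleftrightarrow> v = u" for v
    using Tk_colour_unique[OF T2, of z] z by blast
  then have "\<forall>v. P1 v x \<longleftrightarrow> P2 v z" using u by blast
  moreover have "\<forall>j\<in>Y. (\<rho>1 j = x \<longleftrightarrow> \<rho>2 j = z) \<and> (E1 (\<rho>1 j) x \<longleftrightarrow> E2 (\<rho>2 j) z) \<and>
      (E1 x (\<rho>1 j) \<longleftrightarrow> E2 z (\<rho>2 j))"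
  proof
    fix j assume j: "j \<in> Y"
    have "\<rho>2 j \<in> A" using j unfolding A_def by blast
    moreover have "\<rho>2 j \<in> Sin \<longleftrightarrow> E1 (\<rho>1 j) x" "\<rho>2 j \<in> Sout \<longleftrightarrow> E1 x (\<rho>1 j)"
      unfolding Sin_def Sout_def by (rule partial_iso_image_iff[OF iso j])+
    ultimately show "(\<rho>1 j = x \<longleftrightarrow> \<rho>2 j = z) \<and> (E1 (\<rho>1 j) x \<longleftrightarrow> E2 (\<rho>2 j) z) \<and>
      (E1 x (\<rho>1 j) \<longleftrightarrow> E2 z (\<rho>2 j))"
      using False j z z_in z_out by blast
  qed
  ultimately have "partial_iso E1 P1 E2 P2 (insert i Y) (\<rho>1(i := x)) (\<rho>2(i := z))"
    using Tk_no_loop[OF T1] Tk_no_loop[OF T2] by (intro partial_iso_insert[OF iso]) auto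
  with z show ?thesis by blast
qed

lemma partial_iso_sat_iff:
  assumes T1: "Tk_coloured_digraph k V1 E1 P1" and T2: "Tk_coloured_digraph k V2 E2 P2"
    and ext1: "extension_property k N V1 E1 P1" and ext2: "extension_property k N V2 E2 P2"
  shows "finite X \<Longrightarrow> free_vars \<phi> \<subseteq> X \<Longrightarrow> card X + quantifier_depth \<phi> \<le> N \<Longrightarrow>
    \<forall>j. \<rho>1 j \<in> V1 \<Longrightarrow> \<forall>j. \<rho>2 j \<in> V2 \<Longrightarrow> partial_iso E1 P1 E2 P2 X \<rho>1 \<rho>2 \<Longrightarrow>
    sat V1 E1 P1 \<rho>1 \<phi> \<longleftrightarrow> sat V2 E2 P2 \<rho>2 \<phi>"
proof (induction \<phi> arbitrary: X \<rho>1 \<rho>2)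
  case (FConj \<phi> \<psi>)
  have "sat V1 E1 P1 \<rho>1 \<phi> \<longleftrightarrow> sat V2 E2 P2 \<rho>2 \<phi>"
    by (rule FConj.IH(1)) (use FConj.prems in auto)
  moreover have "sat V1 E1 P1 \<rho>1 \<psi> \<longleftrightarrow> sat V2 E2 P2 \<rho>2 \<psi>"
    by (rule FConj.IH(2)) (use FConj.prems in auto)
  ultimately show ?case by simp
next
  case (FNeg \<phi>)
  then show ?case by simp
next
  case (FEx i \<phi>)
  define Y where "Y = X - {i}"
  have Y: "finite Y" "card Y \<le> N" "i \<notin> Y"
    using FEx.prems(1,3) card_Diff1_le[of X i] unfolding Y_def by auto
  have depth: "card (insert i Y) + quantifier_depth \<phi> \<le> N"
    using FEx.prems(1,3) card_Diff1_le[of X i] unfolding Y_def by (simp add: card_insert_if)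
  have fv: "free_vars \<phi> \<subseteq> insert i Y" using FEx.prems(2) unfolding Y_def by auto
  have iso: "partial_iso E1 P1 E2 P2 Y \<rho>1 \<rho>2"
    using FEx.prems(6) partial_iso_subset unfolding Y_def by blast
  have IH: "sat V1 E1 P1 (\<rho>1(i := x)) \<phi> \<longleftrightarrow> sat V2 E2 P2 (\<rho>2(i := y)) \<phi>"
    if "x \<in> V1" "y \<in> V2" "partial_iso E1 P1 E2 P2 (insert i Y) (\<rho>1(i := x)) (\<rho>2(i := y))" for x y
    using FEx.IH[of "insert i Y"] Y(1) fv depth FEx.prems(4,5) that by simp
  show ?case
  proof
    assume "sat V1 E1 P1 \<rho>1 (FEx i \<phi>)"
    then obtain x where x: "x \<in> V1" "sat V1 E1 P1 (\<rho>1(i := x)) \<phi>" by auto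
    obtain y where "y \<in> V2" "partial_iso E1 P1 E2 P2 (insert i Y) (\<rho>1(i := x)) (\<rho>2(i := y))"
      using extension_property_forth[OF T1 T2 ext2 Y(1,2) FEx.prems(5) iso x(1)] by blast
    with x IH show "sat V2 E2 P2 \<rho>2 (FEx i \<phi>)" by auto
  next
    assume "sat V2 E2 P2 \<rho>2 (FEx i \<phi>)"
    then obtain y where y: "y \<in> V2" "sat V2 E2 P2 (\<rho>2(i := y)) \<phi>" by auto
    obtain x where "x \<in> V1" "partial_iso E2 P2 E1 P1 (insert i Y) (\<rho>2(i := y)) (\<rho>1(i := x))"
      using extension_property_forth[OF T2 T1 ext1 Y(1,2) FEx.prems(4) partial_iso_sym[OF iso] y(1)]
      by blast
    with y IH[OF \<open>x \<in> V1\<close> y(1) partial_iso_sym] show "sat V1 E1 P1 \<rho>1 (FEx i \<phi>)" by auto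
  qed
qed (simp_all add: partial_iso_def)

lemma extension_property_nonempty:
  assumes "extension_property k N V E P" and "k \<ge> 1"
  shows "V \<noteq> {}"
proof -
  have "\<exists>z\<in>V - {}. P 1 z \<and> (\<forall>a\<in>{}. E a z \<longleftrightarrow> a \<in> {}) \<and> (\<forall>a\<in>{}. E z a \<longleftrightarrow> a \<in> {})"
    using assms(2) by (intro assms(1)[unfolded extension_property_def, rule_format]) auto
  then show ?thesis by blast
qed

lemma extension_property_models_iff:
  assumes T1: "Tk_coloured_digraph k V1 E1 P1" and T2: "Tk_coloured_digraph k V2 E2 P2"
    and ext1: "extension_property k N V1 E1 P1" and ext2: "extension_property k N V2 E2 P2"
    and "k \<ge> 1" and "free_vars \<phi> = {}" and "quantifier_depth \<phi> \<le> N"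
  shows "models V1 E1 P1 \<phi> \<longleftrightarrow> models V2 E2 P2 \<phi>"
proof -
  \<comment> \<open>\<open>models\<close> quantifies over all assignments, so it is vacuous on an empty structure\<close>
  obtain a1 a2 where a: "a1 \<in> V1" "a2 \<in> V2"
    using extension_property_nonempty[OF ext1] extension_property_nonempty[OF ext2] \<open>k \<ge> 1\<close> by blast
  have sat_iff: "sat V1 E1 P1 \<rho>1 \<phi> \<longleftrightarrow> sat V2 E2 P2 \<rho>2 \<phi>"
    if "\<forall>j. \<rho>1 j \<in> V1" "\<forall>j. \<rho>2 j \<in> V2" for \<rho>1 \<rho>2
    using partial_iso_sat_iff[OF T1 T2 ext1 ext2, of "{}" \<phi> \<rho>1 \<rho>2] that assms(6,7)
    by (simp add: partial_iso_def)
  show ?thesis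
  proof
    assume "models V1 E1 P1 \<phi>"
    then have "sat V1 E1 P1 (\<lambda>_. a1) \<phi>"
      using a(1) unfolding models_def by (auto dest: spec[of _ "\<lambda>_. a1"])
    then show "models V2 E2 P2 \<phi>"
      using sat_iff[of "\<lambda>_. a1"] a(1) unfolding models_def by blast
  next
    assume "models V2 E2 P2 \<phi>"
    then have "sat V2 E2 P2 (\<lambda>_. a2) \<phi>"
      using a(2) unfolding models_def by (auto dest: spec[of _ "\<lambda>_. a2"])
    then show "models V1 E1 P1 \<phi>"
      using sat_iff[of _ "\<lambda>_. a2"] a(2) unfolding models_def by blast
  qed
qed

section \<open>The extension property of \<open>C_D\<close>\<close>

lemma embeddingD:
  assumes "embedding f V E P V' E' P'"
  shows embedding_inj: "inj_on f V"
    and embedding_in: "x \<in> V \<Longrightarrow> f x \<in> V'"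
    and embedding_edge_iff: "x \<in> V \<Longrightarrow> y \<in> V \<Longrightarrow> E' (f x) (f y) \<longleftrightarrow> E x y"
    and embedding_colour_iff: "x \<in> V \<Longrightarrow> P' u (f x) \<longleftrightarrow> P u x"
  using assms unfolding embedding_def by blast+

lemma embedding_comp:
  assumes "embedding f W F Q V E P" and "embedding h V E P V' E' P'"
  shows "embedding (h \<circ> f) W F Q V' E' P'"
proof -
  have "f ` W \<subseteq> V" using embedding_in[OF assms(1)] by blast
  then have "inj_on (h \<circ> f) W"
    using embedding_inj[OF assms(1)] embedding_inj[OF assms(2)] by (blast intro: comp_inj_on inj_on_subset)
  then show ?thesis
    unfolding embedding_def using embeddingD[OF assms(1)] embeddingD[OF assms(2)] by auto
qed

lemma homogeneous_extend_embedding: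
  assumes H: "homogeneous V E P" and W0: "finite W0" "W0 \<subseteq> W"
    and f: "embedding f W F Q V E P" and g: "embedding g W0 F Q V E P"
  shows "\<exists>g'. embedding g' W F Q V E P \<and> (\<forall>x\<in>W0. g' x = g x)"
proof -
  have f0: "bij_betw f W0 (f ` W0)"
    using embedding_inj[OF f] W0(2) inj_on_subset unfolding bij_betw_def by blast
  have g0: "bij_betw g W0 (g ` W0)"
    using embedding_inj[OF g] unfolding bij_betw_def by blast
  have W0W: "a \<in> W" if "a \<in> W0" for a using W0(2) that by blast
  define h0 where "h0 = g \<circ> inv_into W0 f"
  have h0f: "h0 (f a) = g a" if "a \<in> W0" for a
    unfolding h0_def using bij_betw_inv_into_left[OF f0 that] by simp
  have "\<exists>h. bij_betw h V V \<and> embedding h V E P V E P \<and> (\<forall>x\<in>f ` W0. h x = h0 x)"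
  proof (rule H[unfolded homogeneous_def, rule_format], intro conjI)
    show "bij_betw h0 (f ` W0) (g ` W0)"
      unfolding h0_def by (rule bij_betw_trans[OF bij_betw_inv_into[OF f0] g0])
    show "\<forall>x\<in>f ` W0. \<forall>y\<in>f ` W0. E (h0 x) (h0 y) \<longleftrightarrow> E x y"
      using W0W h0f embedding_edge_iff[OF f] embedding_edge_iff[OF g] by auto
    show "\<forall>u. \<forall>x\<in>f ` W0. P u (h0 x) \<longleftrightarrow> P u x"
      using W0W h0f embedding_colour_iff[OF f] embedding_colour_iff[OF g] by auto
    show "f ` W0 \<subseteq> V" "g ` W0 \<subseteq> V"
      using W0(2) embedding_in[OF f] embedding_in[OF g] by auto
  qed (use W0 in simp)
  then obtain h where h: "embedding h V E P V E P" "\<forall>x\<in>f ` W0. h x = h0 x" by blast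
  show ?thesis
    using embedding_comp[OF f h(1)] h(2) h0f by auto
qed

text \<open>The structure induced on \<open>g ` {0..<m}\<close>, pulled back to \<open>{0..<m}\<close>, plus a new vertex \<open>m\<close>
  realising the required type.\<close>
definition extension_edges ::
  "nat \<Rightarrow> (nat \<Rightarrow> 'a) \<Rightarrow> ('a \<Rightarrow> 'a \<Rightarrow> bool) \<Rightarrow> 'a set \<Rightarrow> 'a set \<Rightarrow> nat \<Rightarrow> nat \<Rightarrow> bool" where
  "extension_edges m g E Sin Sout i j \<longleftrightarrow>
     (i < m \<and> j < m \<and> E (g i) (g j)) \<or> (i < m \<and> j = m \<and> g i \<in> Sin) \<or> (i = m \<and> j < m \<and> g j \<in> Sout)"

definition extension_colours :: "nat \<Rightarrow> (nat \<Rightarrow> 'a) \<Rightarrow> (nat \<Rightarrow> 'a \<Rightarrow> bool) \<Rightarrow> nat \<Rightarrow> nat \<Rightarrow> nat \<Rightarrow> bool" where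
  "extension_colours m g P u v i \<longleftrightarrow> (i < m \<and> P v (g i)) \<or> (i = m \<and> v = u)"

lemma Tk_coloured_digraph_extension:
  assumes T: "Tk_coloured_digraph k V E P" and g: "\<forall>i<m. g i \<in> V" and u: "u \<in> {1..k}"
    and Sin_below: "\<forall>a\<in>Sin. \<forall>v. P v a \<longrightarrow> v < u" and Sout_above: "\<forall>a\<in>Sout. \<forall>v. P v a \<longrightarrow> u < v"
  shows "Tk_coloured_digraph k {0..m} (extension_edges m g E Sin Sout) (extension_colours m g P u)"
  unfolding Tk_coloured_digraph_def
proof (intro conjI)
  show "\<forall>i j. extension_edges m g E Sin Sout i j \<longrightarrow> i \<in> {0..m} \<and> j \<in> {0..m} \<and> i \<noteq> j"
    using Tk_no_loop[OF T] unfolding extension_edges_def by auto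
  show "\<forall>v i. extension_colours m g P u v i \<longrightarrow> v \<in> {1..k} \<and> i \<in> {0..m}"
    using Tk_colour_in[OF T] u unfolding extension_colours_def by auto
  show "\<forall>i\<in>{0..m}. \<exists>!v. extension_colours m g P u v i"
  proof
    fix i assume "i \<in> {0..m}"
    show "\<exists>!v. extension_colours m g P u v i"
    proof (cases "i < m")
      case True
      then show ?thesis using Tk_colour_unique[OF T g[rule_format, OF True]] unfolding extension_colours_def by simp
    next
      case False
      then show ?thesis using \<open>i \<in> {0..m}\<close> unfolding extension_colours_def by simp
    qed
  qed
  show "\<forall>i j v w. extension_edges m g E Sin Sout i j \<longrightarrow> extension_colours m g P u v i \<longrightarrow>
      extension_colours m g P u w j \<longrightarrow> v < w"
    using Tk_edge_colours[OF T] Sin_below Sout_above unfolding extension_edges_def extension_colours_def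
    by auto
qed

lemma is_C_Tk_extension_property:
  assumes C: "is_C_Tk k V E P"
  shows "extension_property k N V E P"
  unfolding extension_property_def
proof (intro allI impI, elim conjE)
  fix A Sin Sout u
  assume A: "finite A" "A \<subseteq> V" and u: "u \<in> {1..k}" and S: "Sin \<subseteq> A" "Sout \<subseteq> A"
    and Sin_below: "\<forall>a\<in>Sin. \<forall>v. P v a \<longrightarrow> v < u" and Sout_above: "\<forall>a\<in>Sout. \<forall>v. P v a \<longrightarrow> u < v"
  have T: "Tk_coloured_digraph k V E P" and H: "homogeneous V E P"
    and U: "\<And>(W :: nat set) F Q. finite W \<Longrightarrow> Tk_coloured_digraph k W F Q \<Longrightarrow> \<exists>f. embedding f W F Q V E P"
    using C unfolding is_C_Tk_def by auto
  define m where "m = card A"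
  obtain g where g: "bij_betw g {0..<m} A"
    using ex_bij_betw_nat_finite[OF A(1)] unfolding m_def by blast
  have gV: "\<forall>i<m. g i \<in> V" using g A(2) unfolding bij_betw_def by auto
  define F where "F = extension_edges m g E Sin Sout"
  define Q where "Q = extension_colours m g P u"
  obtain f where f: "embedding f {0..m} F Q V E P"
    using U[OF _ Tk_coloured_digraph_extension[OF T gV u Sin_below Sout_above]] unfolding F_def Q_def by blast
  have g_emb: "embedding g {0..<m} F Q V E P"
    unfolding embedding_def
  proof (intro conjI ballI allI)
    show "inj_on g {0..<m}" using g by (rule bij_betw_imp_inj_on)
    show "g ` {0..<m} \<subseteq> V" using gV by auto
  qed (auto simp: F_def Q_def extension_edges_def extension_colours_def)
  have sub: "{0..<m} \<subseteq> {0..m}" by auto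
  then obtain g' where g': "embedding g' {0..m} F Q V E P" "\<forall>i\<in>{0..<m}. g' i = g i"
    using homogeneous_extend_embedding[OF H finite_atLeastLessThan _ f g_emb] by blast
  have m: "m \<in> {0..m}" by simp
  have A_eq: "A = g' ` {0..<m}" using g g'(2) unfolding bij_betw_def by auto
  show "\<exists>z\<in>V - A. P u z \<and> (\<forall>a\<in>A. E a z \<longleftrightarrow> a \<in> Sin) \<and> (\<forall>a\<in>A. E z a \<longleftrightarrow> a \<in> Sout)"
  proof (intro bexI conjI ballI)
    have "g' m \<notin> g' ` {0..<m}"
      using inj_on_image_mem_iff[OF embedding_inj[OF g'(1)] m sub] by simp
    then show "g' m \<in> V - A" using embedding_in[OF g'(1) m] unfolding A_eq by blast
    show "P u (g' m)" using embedding_colour_iff[OF g'(1) m] unfolding Q_def extension_colours_def by simp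
  next
    fix a assume "a \<in> A"
    then obtain i where i: "i < m" "a = g' i" "a = g i" using A_eq g'(2) by auto
    then have "i \<in> {0..m}" by simp
    show "E a (g' m) \<longleftrightarrow> a \<in> Sin" "E (g' m) a \<longleftrightarrow> a \<in> Sout"
      using embedding_edge_iff[OF g'(1) \<open>i \<in> {0..m}\<close> m] embedding_edge_iff[OF g'(1) m \<open>i \<in> {0..m}\<close>] i
      unfolding F_def extension_edges_def by auto
  qed
qed

section \<open>Counting \<open>T_k\<close>-coloured digraphs on \<open>{1..n}\<close>\<close>

definition colourings :: "nat \<Rightarrow> nat \<Rightarrow> (nat \<Rightarrow> nat) set" where
  "colourings k n = {1..n} \<rightarrow>\<^sub>E {1..k}"

definition colour_pred :: "nat \<Rightarrow> (nat \<Rightarrow> nat) \<Rightarrow> nat \<Rightarrow> nat \<Rightarrow> bool" where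
  "colour_pred n c u x \<longleftrightarrow> x \<in> {1..n} \<and> c x = u"

definition admissible_arcs :: "nat \<Rightarrow> (nat \<Rightarrow> nat) \<Rightarrow> (nat \<times> nat) set" where
  "admissible_arcs n c = {(x, y) \<in> {1..n} \<times> {1..n}. c x < c y}"

definition colour_class :: "nat \<Rightarrow> (nat \<Rightarrow> nat) \<Rightarrow> nat \<Rightarrow> nat set" where
  "colour_class n c u = {x \<in> {1..n}. c x = u}"

lemma finite_colourings [simp]: "finite (colourings k n)"
  unfolding colourings_def by (simp add: finite_PiE)

lemma card_colourings: "card (colourings k n) = k ^ n"
  unfolding colourings_def by (simp add: card_PiE)

lemma finite_admissible_arcs [simp]: "finite (admissible_arcs n c)"
  unfolding admissible_arcs_def by (rule finite_subset[of _ "{1..n} \<times> {1..n}"]) auto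

lemma finite_colour_class [simp]: "finite (colour_class n c u)"
  unfolding colour_class_def by simp

lemma Tk_coloured_digraph_colour_pred:
  assumes "c \<in> colourings k n" and "F \<subseteq> admissible_arcs n c"
  shows "Tk_coloured_digraph k {1..n} (in_rel F) (colour_pred n c)"
proof -
  have c: "\<And>x. x \<in> {1..n} \<Longrightarrow> c x \<in> {1..k}" using assms(1) unfolding colourings_def by auto
  have F: "\<And>x y. (x, y) \<in> F \<Longrightarrow> x \<in> {1..n} \<and> y \<in> {1..n} \<and> c x < c y"
    using assms(2) unfolding admissible_arcs_def by auto
  show ?thesis
    unfolding Tk_coloured_digraph_def colour_pred_def using c F by fastforce
qed

lemma Tk_coloured_digraph_decode:
  assumes T: "Tk_coloured_digraph k {1..n} E P"
  obtains c F where "c \<in> colourings k n" "F \<subseteq> admissible_arcs n c" "E = in_rel F" "P = colour_pred n c"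
proof -
  define c where "c = (\<lambda>x\<in>{1..n}. THE u. P u x)"
  have P_iff: "P u x \<longleftrightarrow> colour_pred n c u x" for u x
  proof
    assume "P u x"
    then have x: "x \<in> {1..n}" using Tk_colour_in[OF T] by blast
    then have "(THE u. P u x) = u" using Tk_colour_unique[OF T x] \<open>P u x\<close> by (metis the_equality)
    then show "colour_pred n c u x" using x unfolding c_def colour_pred_def by simp
  next
    assume "colour_pred n c u x"
    then have "x \<in> {1..n}" "c x = u" unfolding colour_pred_def by auto
    then show "P u x" using Tk_colour_unique[OF T] unfolding c_def by (metis restrict_apply' theI')
  qed
  have c: "c \<in> colourings k n"
    unfolding colourings_def
  proof (rule PiE_I)
    fix x assume "x \<in> {1..n}"
    then have "P (c x) x" using P_iff unfolding colour_pred_def by blast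
    then show "c x \<in> {1..k}" using Tk_colour_in[OF T] by blast
  qed (auto simp: c_def)
  define F where "F = {(x, y). E x y}"
  have "F \<subseteq> admissible_arcs n c"
  proof (safe)
    fix x y assume "(x, y) \<in> F"
    then have xy: "E x y" "x \<in> {1..n}" "y \<in> {1..n}" using Tk_edge_in[OF T] unfolding F_def by auto
    then have "P (c x) x" "P (c y) y" using P_iff unfolding colour_pred_def by auto
    then show "(x, y) \<in> admissible_arcs n c"
      using Tk_edge_colours[OF T xy(1)] xy unfolding admissible_arcs_def by auto
  qed
  moreover have "E = in_rel F" unfolding F_def by (simp add: fun_eq_iff)
  moreover have "P = colour_pred n c" using P_iff by (intro ext) blast
  ultimately show ?thesis using c that by blast
qed

lemma inj_on_Tk_encoding:
  "inj_on (\<lambda>(c, F). (in_rel F, colour_pred n c)) (SIGMA c:colourings k n. Pow (admissible_arcs n c))"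
proof (rule inj_onI, clarsimp)
  fix c F c' F'
  assume c: "c \<in> colourings k n" "c' \<in> colourings k n"
    and eq: "in_rel F = in_rel F'" "colour_pred n c = colour_pred n c'"
  have "F = F'"
    using eq(1) by (metis in_rel_Collect_case_prod_eq Collect_mem_eq case_prod_curry curry_def)
  moreover have "c x = c' x" for x
  proof (cases "x \<in> {1..n}")
    case True
    have "colour_pred n c (c x) x" using True unfolding colour_pred_def by simp
    then have "colour_pred n c' (c x) x" using eq(2) by simp
    then show ?thesis unfolding colour_pred_def by simp
  next
    case False
    then show ?thesis using c unfolding colourings_def PiE_def extensional_def by auto
  qed
  ultimately show "c = c' \<and> F = F'" by auto
qed

lemma Tk_coloured_digraph_encoding:
  "bij_betw (\<lambda>(c, F). (in_rel F, colour_pred n c))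
     (SIGMA c:colourings k n. Pow (admissible_arcs n c)) {(E, P). Tk_coloured_digraph k {1..n} E P}"
proof (rule bij_betw_imageI[OF inj_on_Tk_encoding], intro equalityI subsetI)
  fix EP assume "EP \<in> (\<lambda>(c, F). (in_rel F, colour_pred n c)) ` (SIGMA c:colourings k n. Pow (admissible_arcs n c))"
  then obtain c F where "EP = (in_rel F, colour_pred n c)" "c \<in> colourings k n" "F \<subseteq> admissible_arcs n c"
    by auto
  then show "EP \<in> {(E, P). Tk_coloured_digraph k {1..n} E P}"
    using Tk_coloured_digraph_colour_pred by simp
next
  fix EP assume "EP \<in> {(E, P). Tk_coloured_digraph k {1..n} E P}"
  then obtain E P where EP: "EP = (E, P)" and T: "Tk_coloured_digraph k {1..n} E P" by auto
  obtain c F where "c \<in> colourings k n" "F \<subseteq> admissible_arcs n c" "E = in_rel F" "P = colour_pred n c"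
    using Tk_coloured_digraph_decode[OF T] .
  then show "EP \<in> (\<lambda>(c, F). (in_rel F, colour_pred n c)) ` (SIGMA c:colourings k n. Pow (admissible_arcs n c))"
    using EP by auto
qed

lemma card_Tk_coloured_digraphs:
  "card {(E, P). Tk_coloured_digraph k {1..n} E P \<and> R E P} =
     (\<Sum>c\<in>colourings k n. card {F. F \<subseteq> admissible_arcs n c \<and> R (in_rel F) (colour_pred n c)})"
proof -
  have "bij_betw (\<lambda>(c, F). (in_rel F, colour_pred n c))
      {p \<in> (SIGMA c:colourings k n. Pow (admissible_arcs n c)). case p of (c, F) \<Rightarrow> R (in_rel F) (colour_pred n c)}
      {q \<in> {(E, P). Tk_coloured_digraph k {1..n} E P}. case q of (E, P) \<Rightarrow> R E P}"
    by (rule bij_betw_Collect[OF Tk_coloured_digraph_encoding]) auto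
  moreover have "{p \<in> (SIGMA c:colourings k n. Pow (admissible_arcs n c)). case p of (c, F) \<Rightarrow> R (in_rel F) (colour_pred n c)}
      = (SIGMA c:colourings k n. {F. F \<subseteq> admissible_arcs n c \<and> R (in_rel F) (colour_pred n c)})"
    by auto
  moreover have "{q \<in> {(E, P). Tk_coloured_digraph k {1..n} E P}. case q of (E, P) \<Rightarrow> R E P} =
      {(E, P). Tk_coloured_digraph k {1..n} E P \<and> R E P}"
    by auto
  ultimately show ?thesis
    by (simp add: bij_betw_same_card[symmetric])
qed

lemma card_Tk_coloured_digraphs_all:
  "card {(E, P). Tk_coloured_digraph k {1..n} E P} = (\<Sum>c\<in>colourings k n. 2 ^ card (admissible_arcs n c))"
  using card_Tk_coloured_digraphs[of k n "\<lambda>_ _. True"] by (simp add: card_Pow flip: Pow_def)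

definition failing_arc_sets :: "nat \<Rightarrow> nat \<Rightarrow> nat \<Rightarrow> (nat \<Rightarrow> nat) \<Rightarrow> (nat \<times> nat) set set" where
  "failing_arc_sets k N n c =
     {F. F \<subseteq> admissible_arcs n c \<and> \<not> extension_property k N {1..n} (in_rel F) (colour_pred n c)}"

lemma card_not_extension_property:
  "card {(E, P). Tk_coloured_digraph k {1..n} E P \<and> \<not> extension_property k N {1..n} E P} =
     (\<Sum>c\<in>colourings k n. card (failing_arc_sets k N n c))"
  unfolding card_Tk_coloured_digraphs failing_arc_sets_def ..

lemma card_failing_arc_sets_le: "card (failing_arc_sets k N n c) \<le> 2 ^ card (admissible_arcs n c)"
proof -
  have "card (failing_arc_sets k N n c) \<le> card (Pow (admissible_arcs n c))"
    unfolding failing_arc_sets_def by (rule card_mono) auto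
  then show ?thesis by (simp add: card_Pow)
qed

section \<open>Colourings with a small colour class\<close>

lemma sum_power2_ge_deviation:
  fixes s :: "'a \<Rightarrow> real"
  assumes "finite I" and "i \<in> I"
  shows "(\<Sum>j\<in>I. s j) ^ 2 / card I + (s i - (\<Sum>j\<in>I. s j) / card I) ^ 2 \<le> (\<Sum>j\<in>I. s j ^ 2)"
proof -
  define a where "a = (\<Sum>j\<in>I. s j) / card I"
  have I: "real (card I) > 0" using assms card_gt_0_iff by fastforce
  have "(\<Sum>j\<in>I. (s j - a) ^ 2) = (\<Sum>j\<in>I. s j ^ 2 - 2 * a * s j + a ^ 2)"
    by (rule sum.cong) (auto simp: power2_diff algebra_simps)
  also have "\<dots> = (\<Sum>j\<in>I. s j ^ 2) - 2 * a * (\<Sum>j\<in>I. s j) + card I * a ^ 2"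
    by (simp add: sum.distrib sum_subtractf sum_distrib_left)
  also have "\<dots> = (\<Sum>j\<in>I. s j ^ 2) - (\<Sum>j\<in>I. s j) ^ 2 / card I"
    using I unfolding a_def by (simp add: field_simps power2_eq_square)
  finally have "(\<Sum>j\<in>I. (s j - a) ^ 2) = (\<Sum>j\<in>I. s j ^ 2) - (\<Sum>j\<in>I. s j) ^ 2 / card I" .
  moreover have "(s i - a) ^ 2 \<le> (\<Sum>j\<in>I. (s j - a) ^ 2)"
    by (rule member_le_sum) (use assms in auto)
  ultimately show ?thesis unfolding a_def by linarith
qed

lemma sum_card_colour_class:
  assumes "c \<in> colourings k n"
  shows "(\<Sum>u\<in>{1..k}. card (colour_class n c u)) = n"
proof -
  have "(\<Union>u\<in>{1..k}. colour_class n c u) = {1..n}"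
    using assms unfolding colour_class_def colourings_def by auto
  moreover have "card (\<Union>u\<in>{1..k}. colour_class n c u) = (\<Sum>u\<in>{1..k}. card (colour_class n c u))"
    by (rule card_UN_disjoint) (auto simp: colour_class_def)
  ultimately show ?thesis by simp
qed

text \<open>A pair of vertices with distinct colours is admissible in exactly one direction.\<close>
lemma card_admissible_arcs:
  assumes c: "c \<in> colourings k n"
  shows "2 * card (admissible_arcs n c) + (\<Sum>u\<in>{1..k}. card (colour_class n c u) ^ 2) = n ^ 2"
proof -
  define D where "D = (\<Union>u\<in>{1..k}. colour_class n c u \<times> colour_class n c u)"
  have card_D: "card D = (\<Sum>u\<in>{1..k}. card (colour_class n c u) ^ 2)"
  proof -
    have "card D = (\<Sum>u\<in>{1..k}. card (colour_class n c u \<times> colour_class n c u))"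
      unfolding D_def by (rule card_UN_disjoint) (auto simp: colour_class_def)
    then show ?thesis by (simp add: card_cartesian_product power2_eq_square)
  qed
  have card_swap: "card (prod.swap ` admissible_arcs n c) = card (admissible_arcs n c)"
    by (rule card_image) (auto simp: inj_on_def)
  have "{1..n} \<times> {1..n} = (admissible_arcs n c \<union> prod.swap ` admissible_arcs n c) \<union> D"
  proof (intro equalityI subsetI)
    fix p assume "p \<in> {1..n} \<times> {1..n}"
    then obtain x y where p: "p = (x, y)" and xy: "x \<in> {1..n}" "y \<in> {1..n}" by blast
    have "c x \<in> {1..k}" using c xy unfolding colourings_def by auto
    consider "c x < c y" | "c y < c x" | "c x = c y" by linarith
    then show "p \<in> admissible_arcs n c \<union> prod.swap ` admissible_arcs n c \<union> D"
    proof cases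
      case 2
      then have "(y, x) \<in> admissible_arcs n c" using xy unfolding admissible_arcs_def by auto
      then show ?thesis using p by (auto intro: rev_image_eqI[of "(y, x)"])
    qed (use p xy \<open>c x \<in> {1..k}\<close> in \<open>auto simp: admissible_arcs_def D_def colour_class_def\<close>)
  qed (auto simp: admissible_arcs_def D_def colour_class_def)
  moreover have "admissible_arcs n c \<inter> prod.swap ` admissible_arcs n c = {}"
    and "(admissible_arcs n c \<union> prod.swap ` admissible_arcs n c) \<inter> D = {}"
    unfolding admissible_arcs_def D_def colour_class_def by auto
  ultimately have "card ({1..n} \<times> {1..n}) = card (admissible_arcs n c) + card (prod.swap ` admissible_arcs n c) + card D"
    by (simp add: card_Un_disjoint D_def)
  then show ?thesis using card_swap card_D by (simp add: power2_eq_square)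
qed

lemma card_admissible_arcs_real:
  assumes "c \<in> colourings k n"
  shows "2 * real (card (admissible_arcs n c)) = real n ^ 2 - (\<Sum>u\<in>{1..k}. real (card (colour_class n c u)) ^ 2)"
proof -
  have "real (2 * card (admissible_arcs n c) + (\<Sum>u\<in>{1..k}. card (colour_class n c u) ^ 2)) = real (n ^ 2)"
    using card_admissible_arcs[OF assms] by simp
  then show ?thesis by (simp add: of_nat_sum)
qed

definition cyclic_colouring :: "nat \<Rightarrow> nat \<Rightarrow> nat \<Rightarrow> nat" where
  "cyclic_colouring k n = (\<lambda>x\<in>{1..n}. x mod k + 1)"

lemma cyclic_colouring_in_colourings: "k \<ge> 1 \<Longrightarrow> cyclic_colouring k n \<in> colourings k n"
  unfolding cyclic_colouring_def colourings_def by (auto simp: Suc_le_eq)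

lemma card_colour_class_cyclic_colouring:
  assumes "k \<ge> 1"
  shows "card (colour_class n (cyclic_colouring k n) u) \<le> n div k + 1"
proof -
  have "colour_class n (cyclic_colouring k n) u \<subseteq> (\<lambda>j. j * k + (u - 1)) ` {0..n div k}"
  proof
    fix x assume "x \<in> colour_class n (cyclic_colouring k n) u"
    then have x: "x \<in> {1..n}" "x mod k + 1 = u" unfolding colour_class_def cyclic_colouring_def by auto
    have "x = x div k * k + (u - 1)" using x(2) by (metis add_diff_cancel_right' div_mult_mod_eq)
    moreover have "x div k \<le> n div k" using x(1) by (simp add: div_le_mono)
    ultimately show "x \<in> (\<lambda>j. j * k + (u - 1)) ` {0..n div k}" by force
  qed
  then have "card (colour_class n (cyclic_colouring k n) u) \<le> card ((\<lambda>j. j * k + (u - 1)) ` {0..n div k})"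
    by (rule card_mono[rotated]) simp
  also have "\<dots> \<le> card {0..n div k}" by (rule card_image_le) simp
  finally show ?thesis by simp
qed

lemma sum_power2_card_colour_class_cyclic:
  assumes "k \<ge> 1"
  shows "(\<Sum>u\<in>{1..k}. real (card (colour_class n (cyclic_colouring k n) u)) ^ 2) \<le> real n ^ 2 / k + n"
proof -
  let ?s = "\<lambda>u. real (card (colour_class n (cyclic_colouring k n) u))"
  have s_le: "?s u \<le> n / k + 1" for u
  proof -
    have "?s u \<le> real (n div k) + 1"
      using card_colour_class_cyclic_colouring[OF assms, of n u] by linarith
    also have "real (n div k) \<le> n / k" by (rule of_nat_div_le_of_nat)
    finally show ?thesis by simp
  qed
  have "(\<Sum>u\<in>{1..k}. ?s u ^ 2) \<le> (\<Sum>u\<in>{1..k}. ?s u * (n / k + 1))"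
    by (rule sum_mono) (simp add: power2_eq_square s_le mult_left_mono)
  also have "\<dots> = (\<Sum>u\<in>{1..k}. ?s u) * (n / k + 1)"
    by (simp add: sum_distrib_right)
  also have "(\<Sum>u\<in>{1..k}. ?s u) = n"
    using sum_card_colour_class[OF cyclic_colouring_in_colourings[OF assms]] by (metis of_nat_sum)
  finally show ?thesis by (simp add: field_simps power2_eq_square)
qed

lemma card_Tk_coloured_digraphs_pos:
  assumes "k \<ge> 1"
  shows "card {(E, P). Tk_coloured_digraph k {1..n::nat} E P} > 0"
proof -
  have "(2::nat) ^ card (admissible_arcs n (cyclic_colouring k n)) \<le> (\<Sum>c\<in>colourings k n. 2 ^ card (admissible_arcs n c))"
    by (rule member_le_sum) (use cyclic_colouring_in_colourings[OF assms] in auto)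
  then show ?thesis unfolding card_Tk_coloured_digraphs_all
    by (metis less_le_trans two_realpow_ge_one zero_less_power pos2)
qed

lemma card_admissible_arcs_small_class:
  assumes c: "c \<in> colourings k n" and k: "k \<ge> 1" and u: "u \<in> {1..k}"
    and small: "card (colour_class n c u) < n / (2 * k)"
  shows "2 * card (admissible_arcs n c) \<le>
    2 * card (admissible_arcs n (cyclic_colouring k n)) + n - real n ^ 2 / (4 * real k ^ 2)"
proof -
  let ?s = "\<lambda>u. real (card (colour_class n c u))"
  have "(\<Sum>u\<in>{1..k}. ?s u) = n"
    using sum_card_colour_class[OF c] by (metis of_nat_sum)
  moreover have "real k > 0" using k by simp
  then have "n / (2 * k) \<le> n / k - ?s u" using small by (simp add: field_simps)
  then have "(n / (2 * k)) ^ 2 \<le> (n / k - ?s u) ^ 2"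
    by (rule power_mono) simp
  moreover have "(n / (2 * k)) ^ 2 = real n ^ 2 / (4 * real k ^ 2)"
    by (simp add: power_divide power_mult_distrib)
  ultimately have "real n ^ 2 / k + real n ^ 2 / (4 * real k ^ 2) \<le> (\<Sum>u\<in>{1..k}. ?s u ^ 2)"
    using sum_power2_ge_deviation[of "{1..k}" u ?s] u by (simp add: power2_commute)
  then show ?thesis
    using card_admissible_arcs_real[OF c] card_admissible_arcs_real[OF cyclic_colouring_in_colourings[OF k, of n]]
      sum_power2_card_colour_class_cyclic[OF k, of n]
    by linarith
qed

lemma power_card_admissible_arcs_small_class:
  assumes c: "c \<in> colourings k n" and k: "k \<ge> 1" and u: "u \<in> {1..k}"
    and small: "card (colour_class n c u) < n / (2 * k)"
  shows "(2::real) ^ card (admissible_arcs n c) \<le>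
    2 ^ card (admissible_arcs n (cyclic_colouring k n)) * 2 powr ((n - real n ^ 2 / (4 * real k ^ 2)) / 2)"
proof -
  have "real (card (admissible_arcs n c)) \<le>
      card (admissible_arcs n (cyclic_colouring k n)) + (n - real n ^ 2 / (4 * real k ^ 2)) / 2"
    using card_admissible_arcs_small_class[OF c k u small] by (simp add: field_simps)
  then have "2 powr card (admissible_arcs n c) \<le>
      2 powr (card (admissible_arcs n (cyclic_colouring k n)) + (n - real n ^ 2 / (4 * real k ^ 2)) / 2)"
    by (intro powr_mono) auto
  then show ?thesis by (simp add: powr_add powr_realpow)
qed

definition small_class_colourings :: "nat \<Rightarrow> nat \<Rightarrow> (nat \<Rightarrow> nat) set" where
  "small_class_colourings k n =
     {c \<in> colourings k n. \<exists>u\<in>{1..k}. card (colour_class n c u) < real n / (2 * real k)}"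

lemma sum_card_failing_arc_sets_small_class:
  assumes k: "k \<ge> 1"
  shows "(\<Sum>c\<in>small_class_colourings k n. real (card (failing_arc_sets k N n c))) \<le>
    real k ^ n * 2 powr ((n - real n ^ 2 / (4 * real k ^ 2)) / 2) * (\<Sum>c\<in>colourings k n. 2 ^ card (admissible_arcs n c))"
proof -
  let ?X = "2 powr ((n - real n ^ 2 / (4 * real k ^ 2)) / 2)"
  let ?total = "\<Sum>c\<in>colourings k n. (2::real) ^ card (admissible_arcs n c)"
  have "(\<Sum>c\<in>small_class_colourings k n. real (card (failing_arc_sets k N n c))) \<le>
      (\<Sum>c\<in>small_class_colourings k n. ?total * ?X)"
  proof (rule sum_mono)
    fix c assume "c \<in> small_class_colourings k n"
    then obtain u where c: "c \<in> colourings k n"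
      and u: "u \<in> {1..k}" "card (colour_class n c u) < real n / (2 * real k)"
      unfolding small_class_colourings_def by blast
    have "real (card (failing_arc_sets k N n c)) \<le> 2 ^ card (admissible_arcs n c)"
      using card_failing_arc_sets_le by (metis of_nat_le_iff of_nat_numeral of_nat_power)
    also have "\<dots> \<le> 2 ^ card (admissible_arcs n (cyclic_colouring k n)) * ?X"
      by (rule power_card_admissible_arcs_small_class[OF c k u])
    also have "\<dots> \<le> ?total * ?X"
      by (rule mult_right_mono, rule member_le_sum) (use cyclic_colouring_in_colourings[OF k] in auto)
    finally show "real (card (failing_arc_sets k N n c)) \<le> ?total * ?X" .
  qed
  also have "\<dots> = card (small_class_colourings k n) * (?total * ?X)" by simp
  also have "\<dots> \<le> real k ^ n * (?total * ?X)"
  proof (rule mult_right_mono)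
    have "card (small_class_colourings k n) \<le> card (colourings k n)"
      by (rule card_mono) (auto simp: small_class_colourings_def)
    then show "real (card (small_class_colourings k n)) \<le> real k ^ n"
      unfolding card_colourings by (metis of_nat_le_iff of_nat_power)
    show "0 \<le> ?total * ?X" by (simp add: sum_nonneg)
  qed
  finally show ?thesis by (simp add: mult_ac)
qed

section \<open>Colourings without small colour classes\<close>

lemma card_subsets_fix_block:
  assumes U: "finite U" and BU: "B \<subseteq> U" and TB: "T \<subseteq> B" and Q: "\<And>F. Q F = Q (F - B)"
  shows "card {F. F \<subseteq> U \<and> Q F} = 2 ^ card B * card {F. F \<subseteq> U \<and> Q F \<and> F \<inter> B = T}"
proof -
  define G where "G = {H. H \<subseteq> U - B \<and> Q H}"
  have finB: "finite B" using U BU finite_subset by blast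
  have finG: "finite G" unfolding G_def using U by simp
  have b1: "bij_betw (\<lambda>F. (F - B, F \<inter> B)) {F. F \<subseteq> U \<and> Q F} (G \<times> Pow B)"
  proof (rule bij_betw_byWitness[where f' = "\<lambda>(H, S). H \<union> S"])
    show "\<forall>a\<in>{F. F \<subseteq> U \<and> Q F}. (case (a - B, a \<inter> B) of (H, S) \<Rightarrow> H \<union> S) = a" by auto
    show "\<forall>a'\<in>G \<times> Pow B. (\<lambda>F. (F - B, F \<inter> B)) (case a' of (H, S) \<Rightarrow> H \<union> S) = a'"
      unfolding G_def by auto
    show "(\<lambda>F. (F - B, F \<inter> B)) ` {F. F \<subseteq> U \<and> Q F} \<subseteq> G \<times> Pow B"
      unfolding G_def using Q by auto
    show "(\<lambda>(H, S). H \<union> S) ` (G \<times> Pow B) \<subseteq> {F. F \<subseteq> U \<and> Q F}"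
    proof
      fix F assume "F \<in> (\<lambda>(H, S). H \<union> S) ` (G \<times> Pow B)"
      then obtain H S where "H \<in> G" "S \<subseteq> B" "F = H \<union> S" by auto
      moreover have "(H \<union> S) - B = H" using \<open>H \<in> G\<close> \<open>S \<subseteq> B\<close> unfolding G_def by auto
      ultimately show "F \<in> {F. F \<subseteq> U \<and> Q F}" using Q[of F] BU unfolding G_def by auto
    qed
  qed
  have b2: "bij_betw (\<lambda>F. F - B) {F. F \<subseteq> U \<and> Q F \<and> F \<inter> B = T} G"
  proof (rule bij_betw_byWitness[where f' = "\<lambda>H. H \<union> T"])
    show "\<forall>a\<in>{F. F \<subseteq> U \<and> Q F \<and> F \<inter> B = T}. a - B \<union> T = a" by auto
    show "\<forall>a'\<in>G. a' \<union> T - B = a'" unfolding G_def using TB by auto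
    show "(\<lambda>F. F - B) ` {F. F \<subseteq> U \<and> Q F \<and> F \<inter> B = T} \<subseteq> G"
      unfolding G_def using Q by auto
    show "(\<lambda>H. H \<union> T) ` G \<subseteq> {F. F \<subseteq> U \<and> Q F \<and> F \<inter> B = T}"
    proof
      fix F assume "F \<in> (\<lambda>H. H \<union> T) ` G"
      then obtain H where H: "H \<in> G" "F = H \<union> T" by auto
      moreover have "(H \<union> T) - B = H" using H(1) TB unfolding G_def by auto
      moreover have "(H \<union> T) \<inter> B = T" using H(1) TB unfolding G_def by auto
      ultimately show "F \<in> {F. F \<subseteq> U \<and> Q F \<and> F \<inter> B = T}" using Q[of F] BU TB unfolding G_def by auto
    qed
  qed
  have "card {F. F \<subseteq> U \<and> Q F} = card G * 2 ^ card B"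
    using bij_betw_same_card[OF b1] finG finB by (simp add: card_cartesian_product card_Pow)
  moreover have "card {F. F \<subseteq> U \<and> Q F \<and> F \<inter> B = T} = card G"
    using bij_betw_same_card[OF b2] .
  ultimately show ?thesis by simp
qed

lemma card_subsets_avoiding_blocks:
  assumes U: "finite U" and Z: "finite Z"
  shows "(\<forall>z\<in>Z. B z \<subseteq> U \<and> T z \<subseteq> B z \<and> card (B z) \<le> M) \<Longrightarrow>
    (\<forall>z\<in>Z. \<forall>z'\<in>Z. z \<noteq> z' \<longrightarrow> B z \<inter> B z' = {}) \<Longrightarrow>
    real (card {F. F \<subseteq> U \<and> (\<forall>z\<in>Z. F \<inter> B z \<noteq> T z)}) \<le> 2 ^ card U * (1 - 1 / 2 ^ M) ^ card Z"
  using Z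
proof (induction Z rule: finite_induct)
  case empty
  have "{F. F \<subseteq> U \<and> (\<forall>z\<in>{}. F \<inter> B z \<noteq> T z)} = Pow U" by auto
  then show ?case using U by (simp add: card_Pow)
next
  case (insert z Z)
  define Q where "Q = (\<lambda>F. \<forall>z'\<in>Z. F \<inter> B z' \<noteq> T z')"
  have Qeq: "Q F = Q (F - B z)" for F
  proof -
    have "(F - B z) \<inter> B z' = F \<inter> B z'" if "z' \<in> Z" for z'
      using insert.prems(2) insert.hyps(2) that by fastforce
    then show ?thesis unfolding Q_def by simp
  qed
  have Bz: "B z \<subseteq> U" "T z \<subseteq> B z" "card (B z) \<le> M" using insert.prems(1) by auto
  have fb: "card {F. F \<subseteq> U \<and> Q F} = 2 ^ card (B z) * card {F. F \<subseteq> U \<and> Q F \<and> F \<inter> B z = T z}"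
    by (rule card_subsets_fix_block[where Q=Q, OF U Bz(1) Bz(2) Qeq])
  have seteq: "{F. F \<subseteq> U \<and> (\<forall>z\<in>insert z Z. F \<inter> B z \<noteq> T z)} =
     {F. F \<subseteq> U \<and> Q F} - {F. F \<subseteq> U \<and> Q F \<and> F \<inter> B z = T z}"
    unfolding Q_def by auto
  have fin1: "finite {F. F \<subseteq> U \<and> Q F}" using U by simp
  have sub: "{F. F \<subseteq> U \<and> Q F \<and> F \<inter> B z = T z} \<subseteq> {F. F \<subseteq> U \<and> Q F}" by auto
  have IH: "real (card {F. F \<subseteq> U \<and> Q F}) \<le> 2 ^ card U * (1 - 1 / 2 ^ M) ^ card Z"
    using insert.IH insert.prems unfolding Q_def by auto
  define a where "a = real (card {F. F \<subseteq> U \<and> Q F})"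
  define b where "b = real (card {F. F \<subseteq> U \<and> Q F \<and> F \<inter> B z = T z})"
  have ab: "a = 2 ^ card (B z) * b" unfolding a_def b_def using fb by (simp flip: of_nat_power)
  have "real (card {F. F \<subseteq> U \<and> (\<forall>z\<in>insert z Z. F \<inter> B z \<noteq> T z)}) = a - b"
    unfolding seteq a_def b_def using card_Diff_subset[OF finite_subset[OF sub fin1] sub] card_mono[OF fin1 sub]
    by (simp add: of_nat_diff)
  also have "\<dots> = a * (1 - 1 / 2 ^ card (B z))" using ab by (simp add: field_simps)
  also have "\<dots> \<le> a * (1 - 1 / 2 ^ M)"
  proof (rule mult_left_mono)
    show "1 - 1 / 2 ^ card (B z) \<le> 1 - 1 / (2::real) ^ M"
      using Bz(3) by (simp add: power_increasing frac_le)
    show "0 \<le> a" unfolding a_def by simp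
  qed
  also have "\<dots> \<le> 2 ^ card U * (1 - 1 / 2 ^ M) ^ card Z * (1 - 1 / 2 ^ M)"
    by (rule mult_right_mono) (use IH in \<open>auto simp: a_def\<close>)
  also have "\<dots> = 2 ^ card U * (1 - 1 / 2 ^ M) ^ card (insert z Z)"
    using insert.hyps by simp
  finally show ?case .
qed

lemma card_subsets_card_le:
  "card {A. A \<subseteq> {1..n::nat} \<and> card A \<le> N} \<le> (n + 1) ^ N"
proof -
  define L where "L = {xs. set xs \<subseteq> {0..n} \<and> length xs = N}"
  have "{A. A \<subseteq> {1..n::nat} \<and> card A \<le> N} \<subseteq> (\<lambda>xs. set xs - {0}) ` L"
  proof
    fix A assume A: "A \<in> {A. A \<subseteq> {1..n::nat} \<and> card A \<le> N}"
    have finA: "finite A" using A finite_subset by blast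
    define xs where "xs = sorted_list_of_set A @ replicate (N - card A) 0"
    have "set xs - {0} = A" unfolding xs_def using finA A by auto
    moreover have "xs \<in> L" unfolding xs_def L_def using finA A by auto
    ultimately show "A \<in> (\<lambda>xs. set xs - {0}) ` L" by blast
  qed
  then have "card {A. A \<subseteq> {1..n::nat} \<and> card A \<le> N} \<le> card ((\<lambda>xs. set xs - {0}) ` L)"
    by (rule card_mono[rotated]) (simp add: L_def finite_lists_length_eq)
  also have "\<dots> \<le> card L" by (rule card_image_le) (simp add: L_def finite_lists_length_eq)
  also have "card L = (n + 1) ^ N" unfolding L_def by (simp add: card_lists_length_eq)
  finally show ?thesis .
qed

definition extension_instances ::
  "nat \<Rightarrow> nat \<Rightarrow> (nat \<Rightarrow> nat) \<Rightarrow> nat \<Rightarrow> (nat set \<times> nat \<times> nat set \<times> nat set) set" where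
  "extension_instances k n c N = {(A, u, Sin, Sout). A \<subseteq> {1..n} \<and> card A \<le> N \<and> u \<in> {1..k} \<and>
     Sin \<subseteq> A \<and> Sout \<subseteq> A \<and> (\<forall>a\<in>Sin. c a < u) \<and> (\<forall>a\<in>Sout. u < c a)}"

lemma extension_instances_subset:
  "extension_instances k n c N \<subseteq> {A. A \<subseteq> {1..n} \<and> card A \<le> N} \<times> {1..k} \<times>
     {A. A \<subseteq> {1..n} \<and> card A \<le> N} \<times> {A. A \<subseteq> {1..n} \<and> card A \<le> N}"
proof
  fix p assume "p \<in> extension_instances k n c N"
  then obtain A u Sin Sout where p: "p = (A, u, Sin, Sout)" and A: "A \<subseteq> {1..n}" "card A \<le> N"
    and u: "u \<in> {1..k}" and S: "Sin \<subseteq> A" "Sout \<subseteq> A"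
    unfolding extension_instances_def by blast
  have "finite A" using A(1) finite_subset by blast
  then have "card Sin \<le> N" "card Sout \<le> N"
    using card_mono[OF _ S(1)] card_mono[OF _ S(2)] A(2) by auto
  then show "p \<in> {A. A \<subseteq> {1..n} \<and> card A \<le> N} \<times> {1..k} \<times>
     {A. A \<subseteq> {1..n} \<and> card A \<le> N} \<times> {A. A \<subseteq> {1..n} \<and> card A \<le> N}"
    using p A u S by auto
qed

lemma finite_extension_instances [simp]: "finite (extension_instances k n c N)"
  by (rule finite_subset[OF extension_instances_subset]) auto

lemma card_extension_instances: "card (extension_instances k n c N) \<le> k * (n + 1) ^ (3 * N)"
proof -
  let ?S = "{A. A \<subseteq> {1..n} \<and> card A \<le> N}"
  have "card (extension_instances k n c N) \<le> card (?S \<times> {1..k} \<times> ?S \<times> ?S)"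
    by (rule card_mono[OF _ extension_instances_subset]) auto
  also have "\<dots> = card ?S * (k * (card ?S * card ?S))"
    by (simp add: card_cartesian_product)
  also have "\<dots> \<le> (n + 1) ^ N * (k * ((n + 1) ^ N * (n + 1) ^ N))"
    using card_subsets_card_le[of n N] by (intro mult_mono) auto
  also have "\<dots> = k * (n + 1) ^ (3 * N)"
    by (simp add: power_add[symmetric] mult_ac numeral_3_eq_3)
  finally show ?thesis .
qed

definition link_arcs :: "nat \<Rightarrow> (nat \<Rightarrow> nat) \<Rightarrow> nat set \<Rightarrow> nat \<Rightarrow> (nat \<times> nat) set" where
  "link_arcs n c A z = admissible_arcs n c \<inter> (A \<times> {z} \<union> {z} \<times> A)"

definition link_pattern :: "nat set \<Rightarrow> nat set \<Rightarrow> nat \<Rightarrow> (nat \<times> nat) set" where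
  "link_pattern Sin Sout z = Sin \<times> {z} \<union> {z} \<times> Sout"

definition unwitnessed_arc_sets ::
  "nat \<Rightarrow> (nat \<Rightarrow> nat) \<Rightarrow> nat set \<times> nat \<times> nat set \<times> nat set \<Rightarrow> (nat \<times> nat) set set" where
  "unwitnessed_arc_sets n c p = (case p of (A, u, Sin, Sout) \<Rightarrow> {F. F \<subseteq> admissible_arcs n c \<and>
     (\<forall>z\<in>colour_class n c u - A. F \<inter> link_arcs n c A z \<noteq> link_pattern Sin Sout z)})"

lemma not_extension_property_instance:
  assumes F: "F \<subseteq> admissible_arcs n c"
    and "\<not> extension_property k N {1..n} (in_rel F) (colour_pred n c)"
  obtains A u Sin Sout where "(A, u, Sin, Sout) \<in> extension_instances k n c N"
    and "\<forall>z\<in>colour_class n c u - A. F \<inter> link_arcs n c A z \<noteq> link_pattern Sin Sout z"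
proof -
  obtain A Sin Sout u where A: "finite A" "A \<subseteq> {1..n}" "card A \<le> N" and u: "u \<in> {1..k}"
    and S: "Sin \<subseteq> A" "Sout \<subseteq> A"
    and Sin_below: "\<forall>a\<in>Sin. \<forall>v. colour_pred n c v a \<longrightarrow> v < u"
    and Sout_above: "\<forall>a\<in>Sout. \<forall>v. colour_pred n c v a \<longrightarrow> u < v"
    and no_witness: "\<not> (\<exists>z\<in>{1..n} - A. colour_pred n c u z \<and> (\<forall>a\<in>A. in_rel F a z \<longleftrightarrow> a \<in> Sin) \<and>
       (\<forall>a\<in>A. in_rel F z a \<longleftrightarrow> a \<in> Sout))"
    using assms(2) unfolding extension_property_def by blast
  have "(A, u, Sin, Sout) \<in> extension_instances k n c N"
    using A u S Sin_below Sout_above unfolding extension_instances_def colour_pred_def by blast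
  moreover have "F \<inter> link_arcs n c A z \<noteq> link_pattern Sin Sout z" if z: "z \<in> colour_class n c u - A" for z
  proof
    assume eq: "F \<inter> link_arcs n c A z = link_pattern Sin Sout z"
    have "z \<notin> A" using z by blast
    have "(a, z) \<in> F \<longleftrightarrow> a \<in> Sin" "(z, a) \<in> F \<longleftrightarrow> a \<in> Sout" if "a \<in> A" for a
    proof -
      have "(a, z) \<in> F \<longleftrightarrow> (a, z) \<in> F \<inter> link_arcs n c A z" "(z, a) \<in> F \<longleftrightarrow> (z, a) \<in> F \<inter> link_arcs n c A z"
        using F that unfolding link_arcs_def by auto
      moreover have "(a, z) \<in> link_pattern Sin Sout z \<longleftrightarrow> a \<in> Sin" "(z, a) \<in> link_pattern Sin Sout z \<longleftrightarrow> a \<in> Sout"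
        using that \<open>z \<notin> A\<close> unfolding link_pattern_def by auto
      ultimately show "(a, z) \<in> F \<longleftrightarrow> a \<in> Sin" "(z, a) \<in> F \<longleftrightarrow> a \<in> Sout"
        unfolding eq by simp_all
    qed
    then show False
      using no_witness z unfolding colour_class_def colour_pred_def by auto
  qed
  ultimately show ?thesis using that by blast
qed

lemma failing_arc_sets_subset_unwitnessed:
  "failing_arc_sets k N n c \<subseteq> (\<Union>p\<in>extension_instances k n c N. unwitnessed_arc_sets n c p)"
proof
  fix F assume "F \<in> failing_arc_sets k N n c"
  then have F: "F \<subseteq> admissible_arcs n c" and "\<not> extension_property k N {1..n} (in_rel F) (colour_pred n c)"
    unfolding failing_arc_sets_def by simp_all
  then obtain A u Sin Sout where p: "(A, u, Sin, Sout) \<in> extension_instances k n c N"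
    and "\<forall>z\<in>colour_class n c u - A. F \<inter> link_arcs n c A z \<noteq> link_pattern Sin Sout z"
    by (rule not_extension_property_instance)
  with F have "F \<in> unwitnessed_arc_sets n c (A, u, Sin, Sout)"
    unfolding unwitnessed_arc_sets_def by simp
  with p show "F \<in> (\<Union>p\<in>extension_instances k n c N. unwitnessed_arc_sets n c p)" by blast
qed

lemma finite_unwitnessed_arc_sets [simp]: "finite (unwitnessed_arc_sets n c p)"
proof -
  have "unwitnessed_arc_sets n c p \<subseteq> Pow (admissible_arcs n c)"
    unfolding unwitnessed_arc_sets_def by (cases p) auto
  then show ?thesis by (rule finite_subset) simp
qed

text \<open>A bound for the probability that one candidate witness fails; the exponent \<open>2N + 1\<close>
  rather than \<open>2N\<close> keeps it positive.\<close>
definition witness_failure :: "nat \<Rightarrow> real" where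
  "witness_failure N = 1 - 1 / 2 ^ (2 * N + 1)"

lemma witness_failure_bounds: "0 < witness_failure N" "witness_failure N < 1"
proof -
  have "(1::real) < 2 ^ (2 * N + 1)" by (rule one_less_power) simp_all
  then have "0 < 1 / (2::real) ^ (2 * N + 1)" "1 / (2::real) ^ (2 * N + 1) < 1" by simp_all
  then show "0 < witness_failure N" "witness_failure N < 1"
    unfolding witness_failure_def by linarith+
qed

text \<open>The link arcs of distinct outside vertices are disjoint, so the candidate witnesses
  fail independently.\<close>
lemma card_unwitnessed_arc_sets:
  assumes p: "(A, u, Sin, Sout) \<in> extension_instances k n c N" and s: "s \<le> card (colour_class n c u)"
  shows "real (card (unwitnessed_arc_sets n c (A, u, Sin, Sout))) \<le>
    2 ^ card (admissible_arcs n c) * witness_failure N ^ (s - N)"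
proof -
  have A: "A \<subseteq> {1..n}" "card A \<le> N" and S: "Sin \<subseteq> A" "Sout \<subseteq> A"
    and Sin_below: "\<forall>a\<in>Sin. c a < u" and Sout_above: "\<forall>a\<in>Sout. u < c a"
    using p unfolding extension_instances_def by auto
  have "finite A" using A(1) finite_subset by blast
  define Z where "Z = colour_class n c u - A"
  have blocks: "\<forall>z\<in>Z. link_arcs n c A z \<subseteq> admissible_arcs n c \<and>
      link_pattern Sin Sout z \<subseteq> link_arcs n c A z \<and> card (link_arcs n c A z) \<le> 2 * N + 1"
  proof
    fix z assume "z \<in> Z"
    then have z: "z \<in> {1..n}" "c z = u" "z \<notin> A" unfolding Z_def colour_class_def by auto
    have "link_pattern Sin Sout z \<subseteq> link_arcs n c A z"
      unfolding link_pattern_def link_arcs_def admissible_arcs_def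
      using S A(1) Sin_below Sout_above z by auto
    moreover have "card (link_arcs n c A z) \<le> card (A \<times> {z}) + card ({z} \<times> A)"
      unfolding link_arcs_def
      by (rule order_trans[OF card_mono card_Un_le]) (use \<open>finite A\<close> in auto)
    ultimately show "link_arcs n c A z \<subseteq> admissible_arcs n c \<and>
      link_pattern Sin Sout z \<subseteq> link_arcs n c A z \<and> card (link_arcs n c A z) \<le> 2 * N + 1"
      using A(2) unfolding link_arcs_def by (simp add: card_cartesian_product)
  qed
  have disjoint: "\<forall>z\<in>Z. \<forall>z'\<in>Z. z \<noteq> z' \<longrightarrow> link_arcs n c A z \<inter> link_arcs n c A z' = {}"
    unfolding Z_def link_arcs_def by auto
  have "unwitnessed_arc_sets n c (A, u, Sin, Sout) =
      {F. F \<subseteq> admissible_arcs n c \<and> (\<forall>z\<in>Z. F \<inter> link_arcs n c A z \<noteq> link_pattern Sin Sout z)}"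
    unfolding unwitnessed_arc_sets_def Z_def by simp
  then have "real (card (unwitnessed_arc_sets n c (A, u, Sin, Sout))) \<le>
      2 ^ card (admissible_arcs n c) * witness_failure N ^ card Z"
    using card_subsets_avoiding_blocks[OF finite_admissible_arcs _ blocks disjoint]
    unfolding Z_def witness_failure_def by simp
  also have "\<dots> \<le> 2 ^ card (admissible_arcs n c) * witness_failure N ^ (s - N)"
  proof (rule mult_left_mono[OF power_decreasing])
    have "card (colour_class n c u) - card A \<le> card Z"
      unfolding Z_def by (rule diff_card_le_card_Diff[OF \<open>finite A\<close>])
    then show "s - N \<le> card Z" using s A(2) by linarith
  qed (use witness_failure_bounds[of N] in simp_all)
  finally show ?thesis .
qed

lemma card_failing_arc_sets_classes_ge:
  assumes s: "\<forall>u\<in>{1..k}. s \<le> card (colour_class n c u)"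
  shows "real (card (failing_arc_sets k N n c))
     \<le> k * (n + 1) ^ (3 * N) * (2 ^ card (admissible_arcs n c) * witness_failure N ^ (s - N))"
proof -
  let ?I = "extension_instances k n c N"
  let ?b = "2 ^ card (admissible_arcs n c) * witness_failure N ^ (s - N) :: real"
  have "card (failing_arc_sets k N n c) \<le> card (\<Union>p\<in>?I. unwitnessed_arc_sets n c p)"
    by (rule card_mono[OF _ failing_arc_sets_subset_unwitnessed]) simp
  also have "\<dots> \<le> (\<Sum>p\<in>?I. card (unwitnessed_arc_sets n c p))"
    by (rule card_UN_le) simp
  finally have "real (card (failing_arc_sets k N n c)) \<le> real (\<Sum>p\<in>?I. card (unwitnessed_arc_sets n c p))"
    by (simp only: of_nat_le_iff)
  also have "\<dots> = (\<Sum>p\<in>?I. real (card (unwitnessed_arc_sets n c p)))"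
    by (rule of_nat_sum)
  also have "\<dots> \<le> (\<Sum>p\<in>?I. ?b)"
  proof (rule sum_mono)
    fix p assume p: "p \<in> ?I"
    obtain A u Sin Sout where p_eq: "p = (A, u, Sin, Sout)" by (cases p)
    then have "u \<in> {1..k}" using p unfolding extension_instances_def by simp
    then show "real (card (unwitnessed_arc_sets n c p)) \<le> ?b"
      using card_unwitnessed_arc_sets[of A u Sin Sout k n c N s] p s unfolding p_eq by simp
  qed
  also have "\<dots> = card ?I * ?b" by simp
  also have "\<dots> \<le> real k * (real n + 1) ^ (3 * N) * ?b"
  proof (rule mult_right_mono)
    have "real (card ?I) \<le> real (k * (n + 1) ^ (3 * N))"
      using card_extension_instances[of k n c N] by (simp only: of_nat_le_iff)
    then show "real (card ?I) \<le> real k * (real n + 1) ^ (3 * N)" by (simp add: add.commute)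
    show "0 \<le> ?b" using witness_failure_bounds[of N] by simp
  qed
  finally show ?thesis .
qed

lemma sum_card_failing_arc_sets_large_classes:
  assumes k: "k \<ge> 1"
  shows "(\<Sum>c\<in>colourings k n - small_class_colourings k n. real (card (failing_arc_sets k N n c))) \<le>
    real k * (real n + 1) ^ (3 * N) * witness_failure N ^ (n div (2 * k) - N) *
      (\<Sum>c\<in>colourings k n. 2 ^ card (admissible_arcs n c))"
proof -
  let ?Y = "real k * (real n + 1) ^ (3 * N) * witness_failure N ^ (n div (2 * k) - N)"
  have "(\<Sum>c\<in>colourings k n - small_class_colourings k n. real (card (failing_arc_sets k N n c))) \<le>
      (\<Sum>c\<in>colourings k n - small_class_colourings k n. ?Y * 2 ^ card (admissible_arcs n c))"
  proof (rule sum_mono)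
    fix c assume "c \<in> colourings k n - small_class_colourings k n"
    then have large: "\<forall>u\<in>{1..k}. real n / (2 * real k) \<le> card (colour_class n c u)"
      unfolding small_class_colourings_def by auto
    have "real (n div (2 * k)) \<le> real n / (2 * real k)"
      using of_nat_div_le_of_nat[of n "2 * k"] by simp
    then have "\<forall>u\<in>{1..k}. n div (2 * k) \<le> card (colour_class n c u)"
      using large by (smt (verit) of_nat_le_iff)
    then show "real (card (failing_arc_sets k N n c)) \<le> ?Y * 2 ^ card (admissible_arcs n c)"
      using card_failing_arc_sets_classes_ge[of k "n div (2 * k)" n c N] by (simp add: mult_ac)
  qed
  also have "\<dots> \<le> ?Y * (\<Sum>c\<in>colourings k n. 2 ^ card (admissible_arcs n c))"
    unfolding sum_distrib_left
    by (rule sum_mono2) (use witness_failure_bounds[of N] in auto)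
  finally show ?thesis .
qed

section \<open>Almost all \<open>T_k\<close>-coloured digraphs have the extension property\<close>

lemma card_not_extension_property_le:
  fixes n :: nat
  assumes k: "k \<ge> 1"
  shows "real (card {(E, P). Tk_coloured_digraph k {1..n} E P \<and> \<not> extension_property k N {1..n} E P})
    \<le> real (card {(E, P). Tk_coloured_digraph k {1..n} E P}) *
       (real k ^ n * 2 powr ((n - real n ^ 2 / (4 * real k ^ 2)) / 2) +
        real k * (real n + 1) ^ (3 * N) * witness_failure N ^ (n div (2 * k) - N))"
proof -
  let ?S = "small_class_colourings k n"
  have "real (card {(E, P). Tk_coloured_digraph k {1..n} E P \<and> \<not> extension_property k N {1..n} E P})
      = (\<Sum>c\<in>colourings k n - ?S. real (card (failing_arc_sets k N n c))) +
        (\<Sum>c\<in>?S. real (card (failing_arc_sets k N n c)))"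
    unfolding card_not_extension_property of_nat_sum
    by (rule sum.subset_diff) (auto simp: small_class_colourings_def)
  also have "\<dots> \<le> real k * (real n + 1) ^ (3 * N) * witness_failure N ^ (n div (2 * k) - N) *
        (\<Sum>c\<in>colourings k n. 2 ^ card (admissible_arcs n c)) +
      real k ^ n * 2 powr ((n - real n ^ 2 / (4 * real k ^ 2)) / 2) *
        (\<Sum>c\<in>colourings k n. 2 ^ card (admissible_arcs n c))"
    by (rule add_mono[OF sum_card_failing_arc_sets_large_classes[OF k] sum_card_failing_arc_sets_small_class[OF k]])
  also have "(\<Sum>c\<in>colourings k n. (2::real) ^ card (admissible_arcs n c)) =
      real (card {(E, P). Tk_coloured_digraph k {1..n} E P})"
    unfolding card_Tk_coloured_digraphs_all by simp
  finally show ?thesis by (simp add: algebra_simps)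
qed

lemma tendsto_exp_neg_quadratic: "c > 0 \<Longrightarrow> (\<lambda>n. exp (b * real n - c * real n ^ 2)) \<longlonglongrightarrow> 0"
  by real_asymp

lemma tendsto_poly_exp_neg_linear: "c > 0 \<Longrightarrow> (\<lambda>n. (real n + 1) ^ a * exp (- c * real n)) \<longlonglongrightarrow> 0"
  by real_asymp

lemma tendsto_small_class_bound:
  assumes "k \<ge> 1"
  shows "(\<lambda>n. real k ^ n * 2 powr ((n - real n ^ 2 / (4 * real k ^ 2)) / 2)) \<longlonglongrightarrow> 0"
proof -
  define b where "b = ln (real k) + ln 2 / 2"
  define c where "c = ln 2 / (8 * real k ^ 2)"
  have k: "real k > 0" using assms by simp
  have "real k ^ n * 2 powr ((n - real n ^ 2 / (4 * real k ^ 2)) / 2) = exp (b * real n - c * real n ^ 2)" for n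
  proof -
    have "real k ^ n * 2 powr ((n - real n ^ 2 / (4 * real k ^ 2)) / 2) =
        exp (real n * ln (real k) + (n - real n ^ 2 / (4 * real k ^ 2)) / 2 * ln 2)"
      using k by (simp add: powr_def exp_add exp_of_nat_mult)
    also have "real n * ln (real k) + (n - real n ^ 2 / (4 * real k ^ 2)) / 2 * ln 2 = b * real n - c * real n ^ 2"
      unfolding b_def c_def using k by (simp add: field_simps)
    finally show ?thesis .
  qed
  moreover have "c > 0" unfolding c_def using k by simp
  ultimately show ?thesis using tendsto_exp_neg_quadratic by presburger
qed

lemma tendsto_large_classes_bound:
  assumes q: "0 < q" "q < 1" and d: "d > 0"
  shows "(\<lambda>n. K * (real n + 1) ^ a * q ^ (n div d - N)) \<longlonglongrightarrow> 0"
proof -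
  define c where "c = - ln q / d"
  have c: "c > 0" unfolding c_def using ln_less_zero[OF q] d by (simp add: divide_neg_pos)
  have bound: "q ^ (n div d - N) \<le> q powr (- real N - 1) * exp (- c * real n)" for n
  proof -
    have "real n / d - 1 \<le> real (n div d)"
      using real_of_int_floor_gt_diff_one[of "real n / d"] unfolding floor_divide_of_nat_eq by simp
    then have "real n / d - N - 1 \<le> real (n div d - N)" by (simp add: of_nat_diff)
    then have "q ^ (n div d - N) \<le> q powr (real n / d - N - 1)"
      using q by (simp add: powr_mono' flip: powr_realpow)
    also have "\<dots> = q powr (- real N - 1) * q powr (real n / d)"
      by (subst powr_add[symmetric]) (simp add: algebra_simps)
    also have "q powr (real n / d) = exp (- c * real n)"
      unfolding c_def powr_def using q by simp
    finally show ?thesis .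
  qed
  have "(\<lambda>n. (real n + 1) ^ a * q ^ (n div d - N)) \<longlonglongrightarrow> 0"
  proof (rule tendsto_sandwich[of "\<lambda>_. 0" _ _ "\<lambda>n. q powr (- real N - 1) * ((real n + 1) ^ a * exp (- c * real n))"])
    show "\<forall>\<^sub>F n in sequentially. 0 \<le> (real n + 1) ^ a * q ^ (n div d - N)"
      using q by simp
    show "\<forall>\<^sub>F n in sequentially. (real n + 1) ^ a * q ^ (n div d - N) \<le>
        q powr (- real N - 1) * ((real n + 1) ^ a * exp (- c * real n))"
    proof (intro always_eventually allI)
      fix n
      have "(real n + 1) ^ a * q ^ (n div d - N) \<le> (real n + 1) ^ a * (q powr (- real N - 1) * exp (- c * real n))"
        by (rule mult_left_mono[OF bound]) simp
      then show "(real n + 1) ^ a * q ^ (n div d - N) \<le> q powr (- real N - 1) * ((real n + 1) ^ a * exp (- c * real n))"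
        by (simp add: mult_ac)
    qed
    show "(\<lambda>n. q powr (- real N - 1) * ((real n + 1) ^ a * exp (- c * real n))) \<longlonglongrightarrow> 0"
      by (rule tendsto_mult_right_zero[OF tendsto_poly_exp_neg_linear[OF c]])
  qed simp
  then show ?thesis
    using tendsto_mult_right_zero[of _ sequentially K] by (simp add: mult.assoc)
qed

lemma tendsto_fraction_not_extension_property:
  assumes k: "k \<ge> 1"
  shows "(\<lambda>n. real (card {(E, P). Tk_coloured_digraph k {1..n} E P \<and> \<not> extension_property k N {1..n} E P}) /
              real (card {(E, P). Tk_coloured_digraph k {1..n} E P})) \<longlonglongrightarrow> 0"
proof (rule tendsto_sandwich[OF _ _ tendsto_const])
  let ?X = "\<lambda>n. real k ^ n * 2 powr ((n - real n ^ 2 / (4 * real k ^ 2)) / 2)"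
  let ?Y = "\<lambda>n. real k * (real n + 1) ^ (3 * N) * witness_failure N ^ (n div (2 * k) - N)"
  show "(\<lambda>n. ?X n + ?Y n) \<longlonglongrightarrow> 0"
    using tendsto_add[OF tendsto_small_class_bound[OF k] tendsto_large_classes_bound[OF witness_failure_bounds, of "2 * k" "real k" "3 * N" N]] k
    by simp
  show "\<forall>\<^sub>F n in sequentially.
      real (card {(E, P). Tk_coloured_digraph k {1..n} E P \<and> \<not> extension_property k N {1..n} E P}) /
      real (card {(E, P). Tk_coloured_digraph k {1..n} E P}) \<le> ?X n + ?Y n"
  proof (intro always_eventually allI)
    fix n :: nat
    have "real (card {(E, P). Tk_coloured_digraph k {1..n} E P}) > 0"
      using card_Tk_coloured_digraphs_pos[OF k] by simp
    then show "real (card {(E, P). Tk_coloured_digraph k {1..n} E P \<and> \<not> extension_property k N {1..n} E P}) /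
        real (card {(E, P). Tk_coloured_digraph k {1..n} E P}) \<le> ?X n + ?Y n"
      using card_not_extension_property_le[OF k, of n N] by (simp add: divide_le_eq mult.commute)
  qed
qed simp

lemma fraction_tendsto_1_if_complement_small:
  fixes T M B :: "nat \<Rightarrow> 'a set"
  assumes pos: "\<And>n. card (T n) > 0" and BT: "\<And>n. B n \<subseteq> T n"
    and MT: "\<And>n. M n \<subseteq> T n" and TMB: "\<And>n. T n - M n \<subseteq> B n"
    and small: "(\<lambda>n. card (B n) / card (T n)) \<longlonglongrightarrow> 0"
  shows "(\<lambda>n. card (M n) / card (T n)) \<longlonglongrightarrow> 1"
proof -
  have fin: "finite (T n)" for n using pos[of n] by (rule card_ge_0_finite)
  have lower: "1 - card (B n) / card (T n) \<le> card (M n) / card (T n)" for n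
  proof -
    have "card (T n - M n) \<le> card (B n)"
      by (rule card_mono[OF finite_subset[OF BT fin] TMB])
    then have "card (T n) - card (M n) \<le> card (B n)"
      unfolding card_Diff_subset[OF finite_subset[OF MT fin] MT] .
    then have "real (card (T n)) - card (B n) \<le> card (M n)"
      using card_mono[OF fin MT] by linarith
    then have "(real (card (T n)) - card (B n)) / card (T n) \<le> card (M n) / card (T n)"
      by (rule divide_right_mono) simp
    then show ?thesis using pos[of n] by (simp add: diff_divide_distrib)
  qed
  have upper: "card (M n) / card (T n) \<le> 1" for n
    using card_mono[OF fin MT, of n] pos[of n] by (simp add: divide_le_eq_1)
  have "(\<lambda>n. 1 - card (B n) / card (T n)) \<longlonglongrightarrow> 1"
    using tendsto_diff[OF tendsto_const small] by simp
  then show ?thesis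
    by (rule tendsto_sandwich[rotated 2, OF _ tendsto_const]) (simp_all add: lower upper)
qed

lemma fraction_not_tendsto_1_if_small:
  fixes T M B :: "nat \<Rightarrow> 'a set"
  assumes pos: "\<And>n. card (T n) > 0" and BT: "\<And>n. B n \<subseteq> T n" and MB: "\<And>n. M n \<subseteq> B n"
    and small: "(\<lambda>n. card (B n) / card (T n)) \<longlonglongrightarrow> 0"
  shows "\<not> (\<lambda>n. card (M n) / card (T n)) \<longlonglongrightarrow> 1"
proof
  assume lim: "(\<lambda>n. card (M n) / card (T n)) \<longlonglongrightarrow> 1"
  have "card (M n) / card (T n) \<le> card (B n) / card (T n)" for n
    using card_mono[OF finite_subset[OF BT card_ge_0_finite[OF pos]] MB] by (simp add: divide_right_mono)
  then have "(1::real) \<le> 0" by (intro LIMSEQ_le[OF lim small]) simp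
  then show False by simp
qed

lemma almost_sure_iff_decided_by_extension_property:
  assumes small: "(\<lambda>n. real (card {(E, P). Tk_coloured_digraph k {1..n} E P \<and> \<not> extension_property k N {1..n} E P}) /
              real (card {(E, P). Tk_coloured_digraph k {1..n} E P})) \<longlonglongrightarrow> 0"
    and pos: "\<And>n. card {(E, P). Tk_coloured_digraph k {1..n::nat} E P} > 0"
    and decided: "\<And>n E P. Tk_coloured_digraph k {1..n::nat} E P \<Longrightarrow> extension_property k N {1..n} E P \<Longrightarrow>
       models {1..n} E P \<phi> \<longleftrightarrow> b"
  shows "almost_sure k \<phi> \<longleftrightarrow> b"
proof -
  define T where "T n = {(E, P). Tk_coloured_digraph k {1..n::nat} E P}" for n
  define B where "B n = {(E, P). Tk_coloured_digraph k {1..n::nat} E P \<and> \<not> extension_property k N {1..n} E P}" for n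
  define M where "M n = {(E, P). Tk_coloured_digraph k {1..n::nat} E P \<and> models {1..n} E P \<phi>}" for n
  have almost_sure_iff: "almost_sure k \<phi> \<longleftrightarrow> (\<lambda>n. card (M n) / card (T n)) \<longlonglongrightarrow> 1"
    unfolding almost_sure_def M_def T_def ..
  have pos': "card (T n) > 0" and small': "(\<lambda>n. card (B n) / card (T n)) \<longlonglongrightarrow> 0" for n
    unfolding T_def B_def using pos small by simp_all
  show ?thesis
  proof (cases b)
    case True
    have "T n - M n \<subseteq> B n" for n
    proof
      fix x assume "x \<in> T n - M n"
      then obtain E P where "x = (E, P)" "Tk_coloured_digraph k {1..n} E P" "\<not> models {1..n} E P \<phi>"
        unfolding T_def M_def by blast
      then show "x \<in> B n" using decided[of n E P] True unfolding B_def by blast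
    qed
    moreover have "B n \<subseteq> T n" "M n \<subseteq> T n" for n unfolding B_def M_def T_def by auto
    ultimately have "(\<lambda>n. card (M n) / card (T n)) \<longlonglongrightarrow> 1"
      by (intro fraction_tendsto_1_if_complement_small[OF pos' _ _ _ small'])
    with True almost_sure_iff show ?thesis by simp
  next
    case False
    have "M n \<subseteq> B n" for n
    proof
      fix x assume "x \<in> M n"
      then obtain E P where "x = (E, P)" "Tk_coloured_digraph k {1..n} E P" "models {1..n} E P \<phi>"
        unfolding M_def by blast
      then show "x \<in> B n" using decided[of n E P] False unfolding B_def by blast
    qed
    moreover have "B n \<subseteq> T n" for n unfolding B_def T_def by auto
    ultimately have "\<not> (\<lambda>n. card (M n) / card (T n)) \<longlonglongrightarrow> 1"
      by (intro fraction_not_tendsto_1_if_small[OF pos' _ _ small'])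
    with False almost_sure_iff show ?thesis by simp
  qed
qed

theorem corollary4p14:
  fixes k :: nat and V :: "'a set" and E :: "'a \<Rightarrow> 'a \<Rightarrow> bool" and P :: "nat \<Rightarrow> 'a \<Rightarrow> bool"
  assumes "k \<ge> 1"
    and "is_C_Tk k V E P"
  shows "{\<phi>. sentence k \<phi> \<and> almost_sure k \<phi>} = {\<phi>. sentence k \<phi> \<and> models V E P \<phi>}"
proof -
  have C: "Tk_coloured_digraph k V E P" using assms(2) unfolding is_C_Tk_def by blast
  have "almost_sure k \<phi> \<longleftrightarrow> models V E P \<phi>" if "sentence k \<phi>" for \<phi>
  proof (rule almost_sure_iff_decided_by_extension_property)
    let ?N = "quantifier_depth \<phi>"
    show "(\<lambda>n. real (card {(E, P). Tk_coloured_digraph k {1..n} E P \<and> \<not> extension_property k ?N {1..n} E P}) /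
        real (card {(E, P). Tk_coloured_digraph k {1..n} E P})) \<longlonglongrightarrow> 0"
      by (rule tendsto_fraction_not_extension_property[OF assms(1)])
    show "card {(E, P). Tk_coloured_digraph k {1..n::nat} E P} > 0" for n
      by (rule card_Tk_coloured_digraphs_pos[OF assms(1)])
    show "models {1..n} E' P' \<phi> \<longleftrightarrow> models V E P \<phi>"
      if "Tk_coloured_digraph k {1..n} E' P'" "extension_property k ?N {1..n} E' P'" for n E' P'
      using extension_property_models_iff[OF that(1) C that(2) is_C_Tk_extension_property[OF assms(2)] assms(1)]
        \<open>sentence k \<phi>\<close> unfolding sentence_def by blast
  qed
  then show ?thesis by blast
qed

end
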